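(* Let $\mu=(p,q,r,s)\in\mathbb{C}^4$ and $\phi\in\Phi_\mu$. Then $\log^+|\phi|=\max\{\log|\phi|,0\}$ has an upper Fibonacci bound on $\Omega$: for a fixed edge $e$ there is $\kappa>0$ with $\log^+|\phi(X)|\le \kappa F_e(X)$ for all $X\in\Omega$.
   Context: Let $\Sigma$ be a countably infinite simplicial tree, properly embedded in the plane, all of whose vertices have degree $3$. A complementary region is the closure of a connected component of the complement of $\Sigma$; $\Omega$ is the set of complementary regions, $E(\Sigma)$ the set of edges. Every edge $e$ is the intersection of exactly two regions $X,Y$, and its two endpoints lie on two further regions $Z,W$ respectively; write $e\leftrightarrow(X,Y;Z,W)$. Three regions meet at each vertex. Fix a coloring $\mathcal C:\Omega\cup E(\Sigma)\to\{1,2,3\}$ such that for every $e\leftrightarrow(X,Y;Z,W)$, $\mathcal C(e)=\mathcal C(Z)=\mathcal C(W)$ and $\mathcal C(e),\mathcal C(X),\mathcal C(Y)$ are pairwise distinct; $\Omega_i$, $E_i$ denote regions/edges of color $i$. For $\mu=(p,q,r,s)\in\mathbb{C}^4$, a $\mu$-Markoff map is $\phi:\Omega\to\mathbb{C}$ such that (i) at every vertex with regions $X\in\Omega_1,Y\in\Omega_2,Z\in\Omega_3$, $x^2+y^2+z^2+xyz=px+qy+rz+s$ where $x=\phi(X)$, etc.; (ii) for $e\in E_1$, $e\leftrightarrow(Y,Z;X,X')$: $\phi(X)+\phi(X')=p-\phi(Y)\phi(Z)$; for $e\in E_2$, $e\leftrightarrow(X,Z;Y,Y')$: $\phi(Y)+\phi(Y')=q-\phi(X)\phi(Z)$;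 for $e\in E_3$, $e\leftrightarrow(X,Y;Z,Z')$: $\phi(Z)+\phi(Z')=r-\phi(X)\phi(Y)$. $\Phi_\mu$ is the set of such maps. Fibonacci function: for a directed edge $\vec e$ with underlying edge $e=X_1\cap X_2$, let $\Omega^0(e)=\{X_1,X_2\}$; removing the interior of $e$ leaves two subtrees $\Sigma^+$ (containing the head of $\vec e$) and $\Sigma^-$; $\Omega^\pm(\vec e)$ is the set of regions whose boundary lies in $\Sigma^\pm$, and $\Omega^{0-}(\vec e)=\Omega^0(e)\cup\Omega^-(\vec e)$. For $Z\in\Omega^{0-}(\vec e)$ let $d(Z)$ be the number of edges in a shortest path from the head of $\vec e$ to $Z$. For $Z\in\Omega^-(\vec e)$ there are exactly two regions $X,Y\in\Omega^{0-}(\vec e)$ with $d(X),d(Y)<d(Z)$ meeting $Z$ (and $X,Y,Z$ meet at a vertex). Define $F_{\vec e}=1$ on $\Omega^0(e)$ and recursively $F_{\vec e}(Z)=F_{\vec e}(X)+F_{\vec e}(Y)$ for such $Z$. Define $F_e(X)=F_{\vec e}(X)$ for $X\in\Omega^{0-}(\vec e)$ and $F_e(X)=F_{-\vec e}(X)$ for $X\in\Omega^+(\vec e)$. *)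

theory Defs
  imports Complex_Main
begin

text \<open>Any countably infinite simplicial tree properly embedded in the plane with all
vertices of degree 3 is, together with its complementary regions, isomorphic to the
dual tree of the Farey tessellation. We use that model: complementary regions are the
extended rationals a/b (including 1/0), represented by coprime integer pairs with a
normalised sign; two regions share an edge iff |ad - bc| = 1; the vertices of \<Sigma> are
the triples of pairwise adjacent regions (Farey triangles).\<close>

type_synonym region = "int \<times> int"

definition Regions :: "region set" where
  "Regions = {(a, b). coprime a b \<and> (b > 0 \<or> (b = 0 \<and> a = 1))}"

definition fdet :: "region \<Rightarrow> region \<Rightarrow> int" where
  "fdet X Y = fst X * snd Y - snd X * fst Y"

definition fadj :: "region \<Rightarrow> region \<Rightarrow> bool" where
  "fadj X Y \<longleftrightarrow> X \<in> Regions \<and> Y \<in> Regions \<and> \<bar>fdet X Y\<bar> = 1"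

text \<open>Edges of \<Sigma>: an edge is identified with the (unordered) pair of regions {X,Y}
whose intersection it is.\<close>
definition Edges :: "region set set" where
  "Edges = {{X, Y} | X Y. fadj X Y}"

text \<open>Vertices of \<Sigma>: a vertex is identified with the set of the three regions meeting there.\<close>
definition Verts :: "region set set" where
  "Verts = {{X, Y, Z} | X Y Z. fadj X Y \<and> fadj Y Z \<and> fadj X Z}"

text \<open>e \<leftrightarrow> (X,Y;Z,W): e = X \<inter> Y and its two endpoints are the vertices {X,Y,Z}, {X,Y,W}.\<close>
definition edge_data :: "region \<Rightarrow> region \<Rightarrow> region \<Rightarrow> region \<Rightarrow> bool" where
  "edge_data X Y Z W \<longleftrightarrow> {X, Y, Z} \<in> Verts \<and> {X, Y, W} \<in> Verts \<and> X \<noteq> Y \<and> Z \<noteq> W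
      \<and> Z \<notin> {X, Y} \<and> W \<notin> {X, Y}"

definition vadj :: "region set \<Rightarrow> region set \<Rightarrow> bool" where
  "vadj u v \<longleftrightarrow> u \<in> Verts \<and> v \<in> Verts \<and> u \<noteq> v \<and> card (u \<inter> v) = 2"

definition valid_coloring :: "(region \<Rightarrow> nat) \<Rightarrow> (region set \<Rightarrow> nat) \<Rightarrow> bool" where
  "valid_coloring CR CE \<longleftrightarrow>
     (\<forall>X\<in>Regions. CR X \<in> {1, 2, 3}) \<and> (\<forall>e\<in>Edges. CE e \<in> {1, 2, 3}) \<and>
     (\<forall>X Y Z W. edge_data X Y Z W \<longrightarrow>
         CE {X, Y} = CR Z \<and> CR Z = CR W \<and>
         CE {X, Y} \<noteq> CR X \<and> CE {X, Y} \<noteq> CR Y \<and> CR X \<noteq> CR Y)"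

definition mu_col :: "complex \<Rightarrow> complex \<Rightarrow> complex \<Rightarrow> nat \<Rightarrow> complex" where
  "mu_col p q r i = (if i = 1 then p else if i = 2 then q else r)"

definition markoff_map ::
  "(region \<Rightarrow> nat) \<Rightarrow> (region set \<Rightarrow> nat) \<Rightarrow> complex \<Rightarrow> complex \<Rightarrow> complex \<Rightarrow> complex
     \<Rightarrow> (region \<Rightarrow> complex) \<Rightarrow> bool" where
  "markoff_map CR CE p q r s \<phi> \<longleftrightarrow>
     (\<forall>X Y Z. {X, Y, Z} \<in> Verts \<and> CR X = 1 \<and> CR Y = 2 \<and> CR Z = 3 \<longrightarrow>
        (\<phi> X)\<^sup>2 + (\<phi> Y)\<^sup>2 + (\<phi> Z)\<^sup>2 + \<phi> X * \<phi> Y * \<phi> Z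
          = p * \<phi> X + q * \<phi> Y + r * \<phi> Z + s) \<and>
     (\<forall>X Y Z W. edge_data X Y Z W \<longrightarrow>
        \<phi> Z + \<phi> W = mu_col p q r (CE {X, Y}) - \<phi> X * \<phi> Y)"

text \<open>A directed edge is given by its tail vertex t and head vertex h (with vadj t h);
its underlying edge is t \<inter> h, so \<Omega>^0 = t \<inter> h.
\<Sigma>^- = vertices reachable from the tail without traversing the edge.\<close>

definition side_minus :: "region set \<Rightarrow> region set \<Rightarrow> region set set" where
  "side_minus t h = {v. (\<lambda>u w. vadj u w \<and> {u, w} \<noteq> {t, h})\<^sup>*\<^sup>* t v}"

text \<open>\<Omega>^-: regions whose boundary lies in \<Sigma>^- (all vertices on the boundary lie in \<Sigma>^-;
then also all boundary edges do, since the removed edge meets \<Sigma>^+ at h).\<close>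
definition Omega_minus :: "region set \<Rightarrow> region set \<Rightarrow> region set" where
  "Omega_minus t h = {Z \<in> Regions. \<forall>v\<in>Verts. Z \<in> v \<longrightarrow> v \<in> side_minus t h}"

definition Omega_0minus :: "region set \<Rightarrow> region set \<Rightarrow> region set" where
  "Omega_0minus t h = (t \<inter> h) \<union> Omega_minus t h"

definition dhead :: "region set \<Rightarrow> region \<Rightarrow> nat" where
  "dhead h Z = (LEAST n. \<exists>v\<in>Verts. Z \<in> v \<and> (vadj ^^ n) h v)"

inductive fib_rel :: "region set \<Rightarrow> region set \<Rightarrow> region \<Rightarrow> nat \<Rightarrow> bool"
  for t h where
  base: "Z \<in> t \<inter> h \<Longrightarrow> fib_rel t h Z 1"
| step: "\<lbrakk> Z \<in> Omega_minus t h; X \<in> Omega_0minus t h; Y \<in> Omega_0minus t h; X \<noteq> Y;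
           {X, Y, Z} \<in> Verts; dhead h X < dhead h Z; dhead h Y < dhead h Z;
           fib_rel t h X a; fib_rel t h Y b \<rbrakk> \<Longrightarrow> fib_rel t h Z (a + b)"

definition fib_dir :: "region set \<Rightarrow> region set \<Rightarrow> region \<Rightarrow> nat" where
  "fib_dir t h Z = (THE n. fib_rel t h Z n)"

definition fib_edge :: "region set \<Rightarrow> region set \<Rightarrow> region \<Rightarrow> nat" where
  "fib_edge t h X = (if X \<in> Omega_0minus t h then fib_dir t h X else fib_dir h t X)"

definition logplus :: "complex \<Rightarrow> real" where
  "logplus z = (if cmod z \<le> 1 then 0 else ln (cmod z))"

end

theory Submission
  imports Defs
begin

text \<open>At a vertex the Markoff relation is a monic quadratic equation for the value z on one
region, with linear coefficient O(M) and constant term \<open>O(M\<^sup>2)\<close>, where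
\<open>M = max 1 \<bar>x\<bar> * max 1 \<bar>y\<bar>\<close> for the values x, y on the other two regions; hence
\<open>\<bar>z\<bar> = O(M)\<close>. So \<open>L = log\<^sup>+ |\<phi>| + c\<close> is subadditive at every vertex, and the recursion
defining \<open>F\<^sub>e\<close> gives \<open>L \<le> \<kappa> F\<^sub>e\<close> with \<open>\<kappa>\<close> the sum of L over the two regions of e.

The combinatorial work is to see that \<open>F\<^sub>e\<close> is well defined. An automorphism of the Farey
graph moves e to the edge between the vertices {1/0, 0/1, 1/1} and {1/0, 0/1, -1/1}. For
that edge the regions on the tail side are the fractions a/b with a, b \<ge> 0, the distance
d(a/b) is the number of steps of the subtractive Euclidean algorithm on (a, b), the two
regions of smaller d at a vertex are the Farey parents of its mediant, and so
\<open>F(a/b) = a + b\<close>.\<close>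

section \<open>Primitive vectors and the Farey graph\<close>

definition region_of :: "int \<times> int \<Rightarrow> int \<times> int" where
  "region_of v = (if snd v > 0 \<or> (snd v = 0 \<and> fst v > 0) then v else (- fst v, - snd v))"

lemma coprime_of_det_unit: "a*d - b*c = 1 \<or> a*d - b*c = -1 \<Longrightarrow> coprime a (b::int)"
proof -
  assume h: "a*d - b*c = 1 \<or> a*d - b*c = -1"
  have "gcd a b dvd a*d - b*c" by (simp add: dvd_diff)
  hence "gcd a b dvd 1" using h by (metis dvd_minus_iff)
  thus ?thesis by (metis is_unit_gcd)
qed

lemma Regions_iff: "(a,b) \<in> Regions \<longleftrightarrow> coprime a b \<and> (b > 0 \<or> (b = 0 \<and> a = 1))"
  by (simp add: Regions_def)

lemma region_of_in_Regions: assumes "coprime x (y::int)" shows "region_of (x,y) \<in> Regions"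
proof -
  have "y = 0 \<Longrightarrow> \<bar>x\<bar> = 1" using assms by (simp add: zdvd1_eq)
  moreover have "coprime (-x) (-y)" using assms by simp
  ultimately show ?thesis using assms by (auto simp: region_of_def Regions_iff)
qed

lemma region_of_Regions: "X \<in> Regions \<Longrightarrow> region_of X = X"
  by (cases X) (auto simp: region_of_def Regions_iff)

lemma region_of_uminus_Regions: "X \<in> Regions \<Longrightarrow> region_of (- fst X, - snd X) = X"
  by (cases X) (auto simp: region_of_def Regions_iff)

lemma Regions_eq_region_of: "W \<in> Regions \<Longrightarrow> W = v \<or> W = (- fst v, - snd v) \<Longrightarrow> W = region_of v"
proof -
  assume W: "W \<in> Regions" and h: "W = v \<or> W = (- fst v, - snd v)"
  show ?thesis
  proof (cases "W = v")
    case True thus ?thesis using region_of_Regions W by simp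
  next
    case False
    hence "v = (- fst W, - snd W)" using h by (cases v) auto
    thus ?thesis using region_of_uminus_Regions W by simp
  qed
qed

lemma region_of_cases: "region_of v = v \<or> region_of v = (- fst v, - snd v)"
  by (simp add: region_of_def)

lemma abs_fdet_region_of_right: "\<bar>fdet X (region_of v)\<bar> = \<bar>fdet X v\<bar>"
  using region_of_cases[of v] by (cases X; cases v) (auto simp: fdet_def algebra_simps)

lemma abs_fdet_region_of_left: "\<bar>fdet (region_of v) X\<bar> = \<bar>fdet v X\<bar>"
  using region_of_cases[of v] by (cases X; cases v) (auto simp: fdet_def algebra_simps)

lemma fdet_swap: "fdet X Y = - fdet Y X" by (simp add: fdet_def)

lemma fadj_sym: "fadj X Y \<Longrightarrow> fadj Y X"
  by (auto simp: fadj_def abs_minus_commute fdet_swap[of Y X])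

lemma fadj_irrefl: "\<not> fadj X X" by (simp add: fadj_def fdet_def)

lemma fadj_Regions: "fadj X Y \<Longrightarrow> X \<in> Regions" "fadj X Y \<Longrightarrow> Y \<in> Regions"
  by (auto simp: fadj_def)

lemma fadj_neq: "fadj X Y \<Longrightarrow> X \<noteq> Y" using fadj_irrefl by blast

lemma fadj_ex: assumes "X \<in> Regions" shows "\<exists>Y. fadj X Y"
proof -
  obtain a b where X: "X = (a,b)" by (cases X)
  have "coprime a b" using assms X by (simp add: Regions_iff)
  then obtain u v where uv: "u*a + v*b = 1" using bezout_int[of a b] by (auto simp: coprime_iff_gcd_eq_1)
  have cp: "coprime (-v) u" by (rule coprime_of_det_unit[where d="-b" and c="-a"]) (use uv in algebra)
  have "\<bar>fdet X (region_of (-v,u))\<bar> = 1" unfolding abs_fdet_region_of_right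
    using uv X by (simp add: fdet_def algebra_simps)
  thus ?thesis using region_of_in_Regions[OF cp] assms unfolding fadj_def by blast
qed

lemma common_fadj_cases:
  assumes "fadj X Y" "fadj X W" "fadj Y W"
  shows "W = region_of (fst X + fst Y, snd X + snd Y) \<or> W = region_of (fst X - fst Y, snd X - snd Y)"
proof -
  obtain a b c d e f where X: "X = (a,b)" and Y: "Y = (c,d)" and W: "W = (e,f)"
    by (cases X; cases Y; cases W) auto
  define D where "D = a*d - b*c"
  define P where "P = e*d - f*c"
  define Q where "Q = a*f - b*e"
  have D: "D = 1 \<or> D = -1" using assms(1) X Y by (auto simp: fadj_def fdet_def D_def)
  have P: "P = 1 \<or> P = -1"
    using assms(3) Y W fadj_sym[OF assms(3)] by (auto simp: fadj_def fdet_def P_def)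
  have Q: "Q = 1 \<or> Q = -1" using assms(2) X W by (auto simp: fadj_def fdet_def Q_def)
  have i1: "D * e = P*a + Q*c" unfolding D_def P_def Q_def by algebra
  have i2: "D * f = P*b + Q*d" unfolding D_def P_def Q_def by algebra
  have WR: "W \<in> Regions" using assms(2) by (simp add: fadj_Regions)
  have "W = (a+c, b+d) \<or> W = (-(a+c), -(b+d)) \<or> W = (a-c, b-d) \<or> W = (-(a-c), -(b-d))"
    using D P Q i1 i2 W by auto
  thus ?thesis using Regions_eq_region_of[OF WR] X Y by auto
qed

lemma fadj_region_of_sum_diff:
  assumes "fadj X Y"
  shows "fadj X (region_of (fst X + fst Y, snd X + snd Y))" "fadj Y (region_of (fst X + fst Y, snd X + snd Y))"
    "fadj X (region_of (fst X - fst Y, snd X - snd Y))" "fadj Y (region_of (fst X - fst Y, snd X - snd Y))"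
    "region_of (fst X + fst Y, snd X + snd Y) \<noteq> region_of (fst X - fst Y, snd X - snd Y)"
proof -
  obtain a b c d where X: "X = (a,b)" and Y: "Y = (c,d)" by (cases X; cases Y) auto
  have D: "a*d - b*c = 1 \<or> a*d - b*c = -1" using assms X Y by (auto simp: fadj_def fdet_def)
  have c1: "coprime (a+c) (b+d)"
    by (rule coprime_of_det_unit[where d="-b" and c="-a"]) (use D in algebra)
  have c2: "coprime (a-c) (b-d)" by (rule coprime_of_det_unit[where d="b" and c="a"]) (use D in algebra)
  have R1: "region_of (a+c,b+d) \<in> Regions" using region_of_in_Regions[OF c1] .
  have R2: "region_of (a-c,b-d) \<in> Regions" using region_of_in_Regions[OF c2] .
  have XR: "X \<in> Regions" "Y \<in> Regions" using assms fadj_Regions by auto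
  show "fadj X (region_of (fst X + fst Y, snd X + snd Y))"
    using R1 XR D X Y unfolding fadj_def abs_fdet_region_of_right by (auto simp: fdet_def algebra_simps)
  show "fadj Y (region_of (fst X + fst Y, snd X + snd Y))"
    using R1 XR D X Y unfolding fadj_def abs_fdet_region_of_right by (auto simp: fdet_def algebra_simps)
  show "fadj X (region_of (fst X - fst Y, snd X - snd Y))"
    using R2 XR D X Y unfolding fadj_def abs_fdet_region_of_right by (auto simp: fdet_def algebra_simps)
  show "fadj Y (region_of (fst X - fst Y, snd X - snd Y))"
    using R2 XR D X Y unfolding fadj_def abs_fdet_region_of_right by (auto simp: fdet_def algebra_simps)
  show "region_of (fst X + fst Y, snd X + snd Y) \<noteq> region_of (fst X - fst Y, snd X - snd Y)"
  proof
    assume "region_of (fst X + fst Y, snd X + snd Y) = region_of (fst X - fst Y, snd X - snd Y)"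
    hence "(a+c,b+d) = (a-c,b-d) \<or> (a+c,b+d) = (-(a-c),-(b-d))"
      using X Y region_of_cases[of "(a+c,b+d)"] region_of_cases[of "(a-c,b-d)"]
        by (auto simp: region_of_def split: if_splits)
    thus False using D by auto
  qed
qed

lemma Verts_iff: "v \<in> Verts \<longleftrightarrow> (\<exists>X Y Z. v = {X,Y,Z} \<and> fadj X Y \<and> fadj Y Z \<and> fadj X Z)"
  by (auto simp: Verts_def)

lemma Verts_fadj: "v \<in> Verts \<Longrightarrow> P \<in> v \<Longrightarrow> Q \<in> v \<Longrightarrow> P \<noteq> Q \<Longrightarrow> fadj P Q"
  by (auto simp: Verts_iff dest: fadj_sym)

lemma Verts_subset_Regions: "v \<in> Verts \<Longrightarrow> v \<subseteq> Regions"
  by (auto simp: Verts_iff dest: fadj_Regions)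

lemma Verts_card: "v \<in> Verts \<Longrightarrow> card v = 3 \<and> finite v"
proof -
  assume "v \<in> Verts"
  then obtain X Y Z where v: "v = {X,Y,Z}" "fadj X Y" "fadj Y Z" "fadj X Z" unfolding Verts_iff by blast
  have "X \<noteq> Y" "Y \<noteq> Z" "X \<noteq> Z" using v fadj_neq by auto
  thus ?thesis using v(1) by simp
qed

lemma triangle_in_Verts: "fadj X Y \<Longrightarrow> fadj Y Z \<Longrightarrow> fadj X Z \<Longrightarrow> {X,Y,Z} \<in> Verts"
  unfolding Verts_iff by blast

lemma Verts_triangle:
  assumes "{X, Y, Z} \<in> Verts"
  shows "fadj X Y" "fadj X Z" "fadj Y Z"
proof -
  have "card {X, Y, Z} = 3" using Verts_card[OF assms] by simp
  hence "X \<noteq> Y" "X \<noteq> Z" "Y \<noteq> Z" by (auto simp: card_insert_if split: if_splits)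
  thus "fadj X Y" "fadj X Z" "fadj Y Z" using Verts_fadj[OF assms] by auto
qed

lemma vadj_sym: "vadj u w \<Longrightarrow> vadj w u" by (auto simp: vadj_def Int_commute)

lemma vadj_shared_edge:
  assumes "vadj u w"
  shows "\<exists>P Q Z W. u = {P,Q,Z} \<and> w = {P,Q,W} \<and> fadj P Q \<and> fadj P Z \<and> fadj Q Z
     \<and> fadj P W \<and> fadj Q W \<and> Z \<noteq> W"
proof -
  have u: "u \<in> Verts" and w: "w \<in> Verts" and ne: "u \<noteq> w" and c2: "card (u \<inter> w) = 2"
    using assms by (auto simp: vadj_def)
  obtain P Q where PQ: "u \<inter> w = {P,Q}" "P \<noteq> Q" using c2 by (auto simp: card_2_iff)
  have cu: "card u = 3" "finite u" and cw: "card w = 3" "finite w" using Verts_card u w by auto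
  have "card (u - {P,Q}) = 1"
  proof -
    have "u - {P,Q} = u - (u \<inter> w)" using PQ by simp
    thus ?thesis using cu c2 by (simp add: card_Diff_subset_Int)
  qed
  then obtain Z where Z: "u - {P,Q} = {Z}" by (auto simp: card_1_singleton_iff)
  have "card (w - {P,Q}) = 1"
  proof -
    have "w - {P,Q} = w - (w \<inter> u)" using PQ by auto
    moreover have "card (w \<inter> u) = 2" using c2 by (simp add: Int_commute)
    ultimately show ?thesis using cw by (simp add: card_Diff_subset_Int)
  qed
  then obtain W where W: "w - {P,Q} = {W}" by (auto simp: card_1_singleton_iff)
  have ueq: "u = {P,Q,Z}" using Z PQ by blast
  have weq: "w = {P,Q,W}" using W PQ by blast
  have "Z \<notin> {P,Q}" "W \<notin> {P,Q}" using Z W by auto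
  hence "Z \<noteq> W" using ne ueq weq by auto
  moreover have "fadj P Q" "fadj P Z" "fadj Q Z" "fadj P W" "fadj Q W"
    using Verts_fadj[OF u, of P Q] Verts_fadj[OF u, of P Z] Verts_fadj[OF u, of Q Z]
      Verts_fadj[OF w, of P W] Verts_fadj[OF w, of Q W]
      ueq weq PQ \<open>Z \<notin> {P,Q}\<close> \<open>W \<notin> {P,Q}\<close> by (simp_all, (metis)+)
  ultimately show ?thesis using ueq weq by blast
qed

section \<open>Automorphisms of the Farey graph\<close>

definition farey_aut :: "(region \<Rightarrow> region) \<Rightarrow> (region \<Rightarrow> region) \<Rightarrow> bool" where
  "farey_aut g g' \<longleftrightarrow> (\<forall>X\<in>Regions. g X \<in> Regions \<and> g' X \<in> Regions \<and> g' (g X) = X \<and> g (g' X) = X)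
     \<and> (\<forall>X\<in>Regions. \<forall>Y\<in>Regions. fadj (g X) (g Y) = fadj X Y \<and> fadj (g' X) (g' Y) = fadj X Y)"

lemma farey_aut_sym: "farey_aut g g' \<Longrightarrow> farey_aut g' g" by (auto simp: farey_aut_def)

lemma farey_aut_Regions: "farey_aut g g' \<Longrightarrow> X \<in> Regions \<Longrightarrow> g X \<in> Regions" by (auto simp: farey_aut_def)
lemma farey_aut_inverse: "farey_aut g g' \<Longrightarrow> X \<in> Regions \<Longrightarrow> g' (g X) = X" by (auto simp: farey_aut_def)

lemma farey_aut_fadj: "farey_aut g g' \<Longrightarrow> fadj X Y \<Longrightarrow> fadj (g X) (g Y)"
  using fadj_Regions[of X Y] unfolding farey_aut_def by blast

lemma farey_aut_inj: "farey_aut g g' \<Longrightarrow> inj_on g Regions"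
  by (rule inj_on_inverseI[where g=g']) (rule farey_aut_inverse)

lemma farey_aut_image_inverse: "farey_aut g g' \<Longrightarrow> u \<subseteq> Regions \<Longrightarrow> g' ` (g ` u) = u"
proof -
  assume a: "farey_aut g g'" and u: "u \<subseteq> Regions"
  have "g' ` (g ` u) = (\<lambda>x. g' (g x)) ` u" by (simp add: image_image)
  also have "\<dots> = id ` u" using farey_aut_inverse[OF a] u by (intro image_cong) auto
  finally show ?thesis by simp
qed

lemma farey_aut_Verts: "farey_aut g g' \<Longrightarrow> v \<in> Verts \<Longrightarrow> g ` v \<in> Verts"
proof -
  assume a: "farey_aut g g'" and "v \<in> Verts"
  then obtain X Y Z where v: "v = {X,Y,Z}" "fadj X Y" "fadj Y Z" "fadj X Z" unfolding Verts_iff by blast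
  have "g ` v = {g X, g Y, g Z}" using v by simp
  thus ?thesis using farey_aut_fadj[OF a] v triangle_in_Verts by metis
qed

lemma farey_aut_image_eq: "farey_aut g g' \<Longrightarrow> u \<subseteq> Regions \<Longrightarrow> w \<subseteq> Regions \<Longrightarrow> g ` u = g ` w \<Longrightarrow> u = w"
  by (metis farey_aut_image_inverse)

lemma farey_aut_vadj: "farey_aut g g' \<Longrightarrow> vadj u w \<Longrightarrow> vadj (g ` u) (g ` w)"
proof -
  assume a: "farey_aut g g'" and vw: "vadj u w"
  have u: "u \<in> Verts" and w: "w \<in> Verts" and ne: "u \<noteq> w" and c: "card (u \<inter> w) = 2"
    using vw by (auto simp: vadj_def)
  have uR: "u \<subseteq> Regions" and wR: "w \<subseteq> Regions" using Verts_subset_Regions u w by auto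
  have inj: "inj_on g Regions" using farey_aut_inj[OF a] .
  have "g ` (u \<inter> w) = g ` u \<inter> g ` w" using inj uR wR by (simp add: inj_on_image_Int)
  moreover have "card (g ` (u \<inter> w)) = card (u \<inter> w)"
    using inj uR by (meson card_image inj_on_subset le_infI1)
  ultimately have "card (g ` u \<inter> g ` w) = 2" using c by simp
  moreover have "g ` u \<noteq> g ` w" using farey_aut_image_eq[OF a uR wR] ne by blast
  ultimately show ?thesis using farey_aut_Verts[OF a u] farey_aut_Verts[OF a w] by (simp add: vadj_def)
qed

lemma farey_aut_relpowp: "farey_aut g g' \<Longrightarrow> (vadj ^^ n) u w \<Longrightarrow> (vadj ^^ n) (g ` u) (g ` w)"
proof (induction n arbitrary: w)
  case 0 thus ?case by simp
next
  case (Suc n)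
  from Suc.prems(2) obtain y where "(vadj ^^ n) u y" "vadj y w" by (auto elim: relpowp_Suc_E)
  thus ?case using Suc.IH[OF Suc.prems(1)] farey_aut_vadj[OF Suc.prems(1)] by (meson relpowp_Suc_I)
qed

lemma farey_aut_side_minus:
  assumes a: "farey_aut g g'" and th: "vadj t h" and v: "v \<in> side_minus t h"
  shows "g ` v \<in> side_minus (g ` t) (g ` h)"
proof -
  have tR: "t \<subseteq> Regions" "h \<subseteq> Regions"
    using th Verts_subset_Regions by (auto simp: vadj_def)
  have "(\<lambda>u w. vadj u w \<and> {u, w} \<noteq> {t, h})\<^sup>*\<^sup>* t v"
    using v by (simp add: side_minus_def)
  hence "(\<lambda>u w. vadj u w \<and> {u, w} \<noteq> {g ` t, g ` h})\<^sup>*\<^sup>* (g ` t) (g ` v)"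
  proof (induction rule: rtranclp_induct)
    case base thus ?case by simp
  next
    case (step y z)
    have yz: "vadj y z" "{y, z} \<noteq> {t, h}" using step.hyps(2) by auto
    have yR: "y \<subseteq> Regions" "z \<subseteq> Regions"
      using yz(1) Verts_subset_Regions by (auto simp: vadj_def)
    have "{g ` y, g ` z} \<noteq> {g ` t, g ` h}"
    proof
      assume "{g ` y, g ` z} = {g ` t, g ` h}"
      hence "(g ` y = g ` t \<and> g ` z = g ` h) \<or> (g ` y = g ` h \<and> g ` z = g ` t)"
        by (simp add: doubleton_eq_iff)
      hence "(y = t \<and> z = h) \<or> (y = h \<and> z = t)"
        using farey_aut_image_eq[OF a] yR tR by metis
      thus False using yz(2) by auto
    qed
    thus ?case using step.IH farey_aut_vadj[OF a yz(1)] by (simp add: rtranclp.rtrancl_into_rtrancl)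
  qed
  thus ?thesis by (simp add: side_minus_def)
qed

lemma Omega_minus_Regions: "Omega_minus t h \<subseteq> Regions" by (auto simp: Omega_minus_def)

lemma Omega_0minus_Regions: "vadj t h \<Longrightarrow> Omega_0minus t h \<subseteq> Regions"
  using Verts_subset_Regions Omega_minus_Regions by (auto simp: vadj_def Omega_0minus_def)

lemma farey_aut_Omega_minus:
  assumes a: "farey_aut g g'" and th: "vadj t h" and Z: "Z \<in> Omega_minus t h"
  shows "g Z \<in> Omega_minus (g ` t) (g ` h)"
proof -
  have ZR: "Z \<in> Regions" and Zv: "\<forall>v\<in>Verts. Z \<in> v \<longrightarrow> v \<in> side_minus t h"
    using Z by (auto simp: Omega_minus_def)
  have a': "farey_aut g' g" using farey_aut_sym[OF a] .
  have "\<forall>v'\<in>Verts. g Z \<in> v' \<longrightarrow> v' \<in> side_minus (g ` t) (g ` h)"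
  proof (intro ballI impI)
    fix v' assume v': "v' \<in> Verts" "g Z \<in> v'"
    have vR: "v' \<subseteq> Regions" using Verts_subset_Regions v'(1) by auto
    have "g' ` v' \<in> Verts" using farey_aut_Verts[OF a' v'(1)] .
    moreover have "Z \<in> g' ` v'" using v'(2) farey_aut_inverse[OF a ZR] by (metis rev_image_eqI)
    ultimately have "g' ` v' \<in> side_minus t h" using Zv by blast
    hence "g ` (g' ` v') \<in> side_minus (g ` t) (g ` h)" using farey_aut_side_minus[OF a th] by blast
    thus "v' \<in> side_minus (g ` t) (g ` h)" using farey_aut_image_inverse[OF a' vR] by simp
  qed
  thus ?thesis using farey_aut_Regions[OF a ZR] by (simp add: Omega_minus_def)
qed

lemma farey_aut_Omega_0minus:
  assumes a: "farey_aut g g'" and th: "vadj t h" and Z: "Z \<in> Omega_0minus t h"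
  shows "g Z \<in> Omega_0minus (g ` t) (g ` h)"
proof (cases "Z \<in> t \<inter> h")
  case True thus ?thesis unfolding Omega_0minus_def by blast
next
  case False thus ?thesis using Z farey_aut_Omega_minus[OF a th] unfolding Omega_0minus_def by blast
qed

lemma farey_aut_dhead:
  assumes a: "farey_aut g g'" and h: "h \<in> Verts" and Z: "Z \<in> Regions"
  shows "dhead (g ` h) (g Z) = dhead h Z"
proof -
  have a': "farey_aut g' g" using farey_aut_sym[OF a] .
  have hR: "h \<subseteq> Regions" using Verts_subset_Regions h by auto
  have eq: "(\<exists>v\<in>Verts. g Z \<in> v \<and> (vadj ^^ n) (g ` h) v) = (\<exists>v\<in>Verts. Z \<in> v \<and> (vadj ^^ n) h v)" for n
  proof (rule iffI)
    assume "\<exists>v\<in>Verts. g Z \<in> v \<and> (vadj ^^ n) (g ` h) v"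
    then obtain v where v: "v \<in> Verts" "g Z \<in> v" "(vadj ^^ n) (g ` h) v" by blast
    have "(vadj ^^ n) (g' ` (g ` h)) (g' ` v)" using farey_aut_relpowp[OF a' v(3)] .
    hence "(vadj ^^ n) h (g' ` v)" using farey_aut_image_inverse[OF a hR] by simp
    moreover have "Z \<in> g' ` v" using v(2) farey_aut_inverse[OF a Z] by (metis rev_image_eqI)
    ultimately show "\<exists>v\<in>Verts. Z \<in> v \<and> (vadj ^^ n) h v"
      using farey_aut_Verts[OF a' v(1)] by blast
  next
    assume "\<exists>v\<in>Verts. Z \<in> v \<and> (vadj ^^ n) h v"
    then obtain v where v: "v \<in> Verts" "Z \<in> v" "(vadj ^^ n) h v" by blast
    thus "\<exists>v\<in>Verts. g Z \<in> v \<and> (vadj ^^ n) (g ` h) v"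
      using farey_aut_relpowp[OF a v(3)] farey_aut_Verts[OF a v(1)] by blast
  qed
  show ?thesis unfolding dhead_def eq ..
qed

lemma farey_aut_fib_rel:
  assumes a: "farey_aut g g'" and th: "vadj t h" and f: "fib_rel t h Z n"
  shows "fib_rel (g ` t) (g ` h) (g Z) n"
  using f
proof (induction rule: fib_rel.induct)
  case (base Z) thus ?case by (intro fib_rel.base) auto
next
  case (step Z X Y a b)
  have hV: "h \<in> Verts" using th by (simp add: vadj_def)
  have R: "X \<in> Regions" "Y \<in> Regions" "Z \<in> Regions"
    using step.hyps(1-3) Omega_0minus_Regions[OF th] Omega_minus_Regions by auto
  have "g X \<noteq> g Y" using step.hyps(4) farey_aut_inverse[OF a] R by metis
  moreover have "{g X, g Y, g Z} \<in> Verts" using farey_aut_Verts[OF a step.hyps(5)] by simp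
  moreover have "dhead (g ` h) (g X) < dhead (g ` h) (g Z)" "dhead (g ` h) (g Y) < dhead (g ` h) (g Z)"
    using step.hyps(6,7) farey_aut_dhead[OF a hV] R by simp_all
  ultimately show ?case
    using step.IH farey_aut_Omega_minus[OF a th step.hyps(1)] farey_aut_Omega_0minus[OF a th step.hyps(2)]
      farey_aut_Omega_0minus[OF a th step.hyps(3)]
    by (intro fib_rel.step) 
qed

lemma farey_aut_fib_rel_iff:
  assumes a: "farey_aut g g'" and th: "vadj t h" and Z: "Z \<in> Regions"
  shows "fib_rel (g ` t) (g ` h) (g Z) n \<longleftrightarrow> fib_rel t h Z n"
proof
  assume f: "fib_rel (g ` t) (g ` h) (g Z) n"
  have th': "vadj (g ` t) (g ` h)" using farey_aut_vadj[OF a th] .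
  have tR: "t \<subseteq> Regions" "h \<subseteq> Regions"
    using th Verts_subset_Regions by (auto simp: vadj_def)
  have "fib_rel (g' ` (g ` t)) (g' ` (g ` h)) (g' (g Z)) n"
    using farey_aut_fib_rel[OF farey_aut_sym[OF a] th' f] .
  thus "fib_rel t h Z n" using farey_aut_image_inverse[OF a] tR farey_aut_inverse[OF a Z] by simp
qed (rule farey_aut_fib_rel[OF a th])

lemma farey_aut_Omega_0minus_iff:
  assumes a: "farey_aut g g'" and th: "vadj t h" and Z: "Z \<in> Regions"
  shows "g Z \<in> Omega_0minus (g ` t) (g ` h) \<longleftrightarrow> Z \<in> Omega_0minus t h"
proof
  assume f: "g Z \<in> Omega_0minus (g ` t) (g ` h)"
  have th': "vadj (g ` t) (g ` h)" using farey_aut_vadj[OF a th] .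
  have tR: "t \<subseteq> Regions" "h \<subseteq> Regions"
    using th Verts_subset_Regions by (auto simp: vadj_def)
  have "g' (g Z) \<in> Omega_0minus (g' ` (g ` t)) (g' ` (g ` h))"
    using farey_aut_Omega_0minus[OF farey_aut_sym[OF a] th' f] .
  thus "Z \<in> Omega_0minus t h"
    using farey_aut_image_inverse[OF a] tR farey_aut_inverse[OF a Z] by simp
qed (rule farey_aut_Omega_0minus[OF a th])

definition lin_map :: "int \<Rightarrow> int \<Rightarrow> int \<Rightarrow> int \<Rightarrow> region \<Rightarrow> region" where
  "lin_map p q r s X = region_of (p * fst X + q * snd X, r * fst X + s * snd X)"

lemma region_of_uminus: "region_of (- fst w, - snd w) = region_of w"
  by (cases w) (auto simp: region_of_def)

lemma lin_map_region_of: "lin_map p q r s (region_of v) = lin_map p q r s v"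
proof (cases "region_of v = v")
  case True thus ?thesis by simp
next
  case False
  hence "region_of v = (- fst v, - snd v)" using region_of_cases[of v] by auto
  thus ?thesis unfolding lin_map_def
    using region_of_uminus[of "(p * fst v + q * snd v, r * fst v + s * snd v)"]
    by (simp add: algebra_simps)
qed

lemma abs_fdet_lin_map: "\<bar>fdet (lin_map p q r s X) (lin_map p q r s Y)\<bar> = \<bar>p*s - q*r\<bar> * \<bar>fdet X Y\<bar>"
  unfolding lin_map_def abs_fdet_region_of_left abs_fdet_region_of_right
  by (cases X; cases Y) (simp add: fdet_def abs_mult[symmetric] algebra_simps)

lemma lin_map_in_Regions: assumes d: "\<bar>p*s - q*r\<bar> = 1" and X: "X \<in> Regions" shows "lin_map p q r s X \<in> Regions"
proof -
  obtain Y where XY: "fadj X Y" using fadj_ex[OF X] by blast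
  obtain a b c e where ab: "X = (a,b)" "Y = (c,e)" by (cases X; cases Y) auto
  have "\<bar>a*e - b*c\<bar> = 1" using XY ab by (simp add: fadj_def fdet_def)
  hence "\<bar>(p*a + q*b)*(r*c + s*e) - (r*a + s*b)*(p*c+q*e)\<bar> = 1"
  proof -
    have "(p*a + q*b)*(r*c + s*e) - (r*a + s*b)*(p*c+q*e) = (p*s - q*r) * (a*e - b*c)" by algebra
    thus ?thesis using d \<open>\<bar>a*e - b*c\<bar> = 1\<close> by (simp add: abs_mult)
  qed
  hence "coprime (p*a + q*b) (r*a + s*b)"
    by (intro coprime_of_det_unit[where d="r*c + s*e" and c="p*c+q*e"]) arith
  thus ?thesis using ab by (simp add: lin_map_def region_of_in_Regions)
qed

lemma lin_map_inverse: assumes d: "\<delta> = p*s - q*r" "\<bar>\<delta>\<bar> = 1" and X: "X \<in> Regions"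
  shows "lin_map (\<delta>*s) (-\<delta>*q) (-\<delta>*r) (\<delta>*p) (lin_map p q r s X) = X"
proof -
  obtain a b where ab: "X = (a,b)" by (cases X)
  have dd: "\<delta> * \<delta> = 1" using d(2) by (cases "\<delta> \<ge> 0") auto
  have e1: "\<delta>*s*(p*a+q*b) + -\<delta>*q*(r*a+s*b) = \<delta>*\<delta>*a" using d(1) by algebra
  have e2: "-\<delta>*r*(p*a+q*b) + \<delta>*p*(r*a+s*b) = \<delta>*\<delta>*b" using d(1) by algebra
  have "lin_map (\<delta>*s) (-\<delta>*q) (-\<delta>*r) (\<delta>*p) (lin_map p q r s X) = lin_map (\<delta>*s) (-\<delta>*q) (-\<delta>*r) (\<delta>*p) (p*a+q*b, r*a+s*b)"
    unfolding lin_map_def[of p q r s] lin_map_region_of using ab by simp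
  also have "\<dots> = region_of (a, b)" unfolding lin_map_def using e1 e2 dd by simp
  also have "\<dots> = X" using region_of_Regions X ab by simp
  finally show ?thesis .
qed

lemma farey_autI:
  assumes "\<And>X. X \<in> Regions \<Longrightarrow> g X \<in> Regions" "\<And>X. X \<in> Regions \<Longrightarrow> g' X \<in> Regions"
    and "\<And>X. X \<in> Regions \<Longrightarrow> g' (g X) = X" "\<And>X. X \<in> Regions \<Longrightarrow> g (g' X) = X"
    and "\<And>X Y. \<bar>fdet (g X) (g Y)\<bar> = \<bar>fdet X Y\<bar>" "\<And>X Y. \<bar>fdet (g' X) (g' Y)\<bar> = \<bar>fdet X Y\<bar>"
  shows "farey_aut g g'"
  using assms by (auto simp: farey_aut_def fadj_def)

lemma farey_aut_lin_map:
  assumes d: "\<delta> = p*s - q*r" "\<bar>\<delta>\<bar> = 1"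
  shows "farey_aut (lin_map p q r s) (lin_map (\<delta>*s) (-\<delta>*q) (-\<delta>*r) (\<delta>*p))"
proof -
  have dd: "\<delta> * \<delta> = 1" using d(2) by (cases "\<delta> \<ge> 0") auto
  have d': "\<delta> = (\<delta>*s)*(\<delta>*p) - (-\<delta>*q)*(-\<delta>*r)" using d(1) dd by algebra
  have double_adjugate: "lin_map (\<delta>*(\<delta>*p)) (-\<delta>*(-\<delta>*q)) (-\<delta>*(-\<delta>*r)) (\<delta>*(\<delta>*s)) = lin_map p q r s"
    using dd by (simp add: mult.assoc[symmetric])
  show ?thesis
  proof (rule farey_autI)
    show "lin_map p q r s X \<in> Regions" "lin_map (\<delta>*s) (-\<delta>*q) (-\<delta>*r) (\<delta>*p) X \<in> Regions"
      if "X \<in> Regions" for X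
      using lin_map_in_Regions[OF _ that] d d' by (metis mult.commute)+
    show "lin_map (\<delta>*s) (-\<delta>*q) (-\<delta>*r) (\<delta>*p) (lin_map p q r s X) = X" if "X \<in> Regions" for X
      using lin_map_inverse[OF d that] .
    show "lin_map p q r s (lin_map (\<delta>*s) (-\<delta>*q) (-\<delta>*r) (\<delta>*p) X) = X" if "X \<in> Regions" for X
      using lin_map_inverse[OF d' d(2) that] by (simp only: double_adjugate)
    show "\<bar>fdet (lin_map p q r s X) (lin_map p q r s Y)\<bar> = \<bar>fdet X Y\<bar>"
      "\<bar>fdet (lin_map (\<delta>*s) (-\<delta>*q) (-\<delta>*r) (\<delta>*p) X) (lin_map (\<delta>*s) (-\<delta>*q) (-\<delta>*r) (\<delta>*p) Y)\<bar>
         = \<bar>fdet X Y\<bar>" for X Y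
      using abs_fdet_lin_map d d' by simp_all
  qed
qed

definition std_tail :: "region set" where "std_tail = {(1,0),(0,1),(1,1)}"
definition std_head :: "region set" where "std_head = {(1,0),(0,1),(-1,1)}"

lemma lin_map_to_std:
  fixes a b c d \<sigma> \<tau> :: int
  assumes \<sigma>: "\<sigma> = a*d - b*c" "\<sigma> = 1 \<or> \<sigma> = -1" and \<tau>: "\<tau> = 1 \<or> \<tau> = -1"
  defines "g \<equiv> lin_map (\<sigma>*d) (-\<sigma>*c) (-\<tau>*\<sigma>*b) (\<tau>*\<sigma>*a)"
  shows "g (a,b) = (1,0)" "g (c,d) = (0,1)"
    "g (region_of (a+\<tau>*c, b+\<tau>*d)) = (1,1)" "g (region_of (a-\<tau>*c, b-\<tau>*d)) = (-1,1)"
proof -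
  have ss: "\<sigma>*\<sigma> = 1" "\<tau>*\<tau> = 1" using \<sigma>(2) \<tau> by auto
  have "\<sigma>*d*a + -\<sigma>*c*b = \<sigma>*\<sigma>" "-\<tau>*\<sigma>*b*a + \<tau>*\<sigma>*a*b = 0"
    unfolding \<sigma>(1) by algebra+
  thus "g (a,b) = (1,0)" using ss by (simp add: g_def lin_map_def region_of_def)
  have "\<sigma>*d*c + -\<sigma>*c*d = 0" "-\<tau>*\<sigma>*b*c + \<tau>*\<sigma>*a*d = \<tau>*\<sigma>*\<sigma>"
    unfolding \<sigma>(1) by algebra+
  thus "g (c,d) = (0,1)" using ss \<tau> by (auto simp: g_def lin_map_def region_of_def)
  have "\<sigma>*d*(a+\<tau>*c) + -\<sigma>*c*(b+\<tau>*d) = \<sigma>*\<sigma>"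
    "-\<tau>*\<sigma>*b*(a+\<tau>*c) + \<tau>*\<sigma>*a*(b+\<tau>*d) = \<tau>*\<tau>*\<sigma>*\<sigma>"
    unfolding \<sigma>(1) by algebra+
  thus "g (region_of (a+\<tau>*c, b+\<tau>*d)) = (1,1)"
    using ss unfolding g_def lin_map_region_of by (simp add: lin_map_def region_of_def)
  have "\<sigma>*d*(a-\<tau>*c) + -\<sigma>*c*(b-\<tau>*d) = \<sigma>*\<sigma>"
    "-\<tau>*\<sigma>*b*(a-\<tau>*c) + \<tau>*\<sigma>*a*(b-\<tau>*d) = -\<tau>*\<tau>*\<sigma>*\<sigma>"
    unfolding \<sigma>(1) by algebra+
  thus "g (region_of (a-\<tau>*c, b-\<tau>*d)) = (-1,1)"
    using ss unfolding g_def lin_map_region_of by (simp add: lin_map_def region_of_def)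
qed

lemma farey_aut_to_std_edge:
  assumes "vadj t h"
  shows "\<exists>g g'. farey_aut g g' \<and> g ` t = std_tail \<and> g ` h = std_head"
proof -
  obtain P Q Z W where s: "t = {P,Q,Z}" "h = {P,Q,W}" "fadj P Q" "fadj P Z" "fadj Q Z"
     "fadj P W" "fadj Q W" "Z \<noteq> W" using vadj_shared_edge[OF assms] by blast
  obtain a b c d where PQ: "P = (a,b)" "Q = (c,d)" by (cases P; cases Q) auto
  define \<sigma> where "\<sigma> = a*d - b*c"
  have \<sigma>: "\<sigma> = 1 \<or> \<sigma> = -1"
    using s(3) PQ by (auto simp: fadj_def fdet_def \<sigma>_def)
  have Z: "Z = region_of (a+c, b+d) \<or> Z = region_of (a-c, b-d)"
    and W: "W = region_of (a+c, b+d) \<or> W = region_of (a-c, b-d)"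
    using common_fadj_cases[OF s(3,4,5)] common_fadj_cases[OF s(3,6,7)] PQ by simp_all
  obtain \<tau> :: int where \<tau>: "\<tau> = 1 \<or> \<tau> = -1"
    and ZW: "Z = region_of (a+\<tau>*c, b+\<tau>*d)" "W = region_of (a-\<tau>*c, b-\<tau>*d)"
  proof (cases "Z = region_of (a+c, b+d)")
    case True
    thus ?thesis using that[of 1] W s(8) by auto
  next
    case False
    thus ?thesis using that[of "-1"] Z W s(8) by auto
  qed
  define g where "g = lin_map (\<sigma>*d) (-\<sigma>*c) (-\<tau>*\<sigma>*b) (\<tau>*\<sigma>*a)"
  define \<delta> where "\<delta> = (\<sigma>*d)*(\<tau>*\<sigma>*a) - (-\<sigma>*c)*(-\<tau>*\<sigma>*b)"
  have "\<delta> = \<tau>*\<sigma>*\<sigma>*\<sigma>" unfolding \<delta>_def \<sigma>_def by algebra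
  hence "\<bar>\<delta>\<bar> = 1" using \<sigma> \<tau> by auto
  hence "farey_aut g (lin_map (\<delta>*(\<tau>*\<sigma>*a)) (-\<delta>*(-\<sigma>*c)) (-\<delta>*(-\<tau>*\<sigma>*b)) (\<delta>*(\<sigma>*d)))"
    unfolding g_def by (rule farey_aut_lin_map[OF \<delta>_def])
  moreover have "g ` t = std_tail" "g ` h = std_head"
    using s(1,2) lin_map_to_std[OF \<sigma>_def \<sigma> \<tau>] ZW PQ
      by (auto simp: g_def std_tail_def std_head_def)
  ultimately show ?thesis by blast
qed

definition reflect :: "region \<Rightarrow> region" where "reflect = lin_map (-1) 0 0 1"

lemma farey_aut_reflect: "farey_aut reflect reflect"
proof -
  have "farey_aut (lin_map (-1) 0 0 1) (lin_map ((-1)*1) (-(-1)*0) (-(-1)*0) ((-1)*(-1)))"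
    by (rule farey_aut_lin_map[where \<delta>="-1"]) simp_all
  thus ?thesis by (simp add: reflect_def)
qed

lemma reflect_simps: "reflect (1,0) = (1,0)" "reflect (0,1) = (0,1)" "reflect (1,1) = (-1,1)" "reflect (-1,1) = (1,1)"
  by (simp_all add: reflect_def lin_map_def region_of_def)

lemma reflect_std_tail: "reflect ` std_tail = std_head" and reflect_std_head: "reflect ` std_head = std_tail"
  by (simp_all add: reflect_simps std_tail_def std_head_def insert_commute)

section \<open>The subtractive Euclidean algorithm\<close>

function euclid_depth :: "nat \<Rightarrow> nat \<Rightarrow> nat" where
  "euclid_depth a b = (if a = 0 \<or> b = 0 then 0 else if b \<le> a then Suc (euclid_depth (a - b) b) else Suc (euclid_depth a (b - a)))"
  by pat_completeness auto
termination by (relation "measure (\<lambda>(a,b). a + b)") auto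

declare euclid_depth.simps[simp del]

lemma euclid_depth_0: "euclid_depth a 0 = 0" "euclid_depth 0 b = 0" by (subst euclid_depth.simps; simp)+

lemma euclid_depth_ge: "b \<le> a \<Longrightarrow> 0 < b \<Longrightarrow> euclid_depth a b = Suc (euclid_depth (a - b) b)"
  by (subst euclid_depth.simps) auto

lemma euclid_depth_less: "a < b \<Longrightarrow> 0 < a \<Longrightarrow> euclid_depth a b = Suc (euclid_depth a (b - a))"
  by (subst euclid_depth.simps) auto

lemma euclid_depth_commute: "euclid_depth a b = euclid_depth b a"
proof (induction "a+b" arbitrary: a b rule: less_induct)
  case less
  show ?case
  proof (cases "a = 0 \<or> b = 0 \<or> a = b")
    case True thus ?thesis using euclid_depth_0 by auto
  next
    case False
    hence ne: "a \<noteq> 0" "b \<noteq> 0" "a \<noteq> b" by auto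
    show ?thesis
    proof (cases "b < a")
      case True
      have "euclid_depth a b = Suc (euclid_depth (a - b) b)"
        using euclid_depth_ge[of b a] True ne by simp
      moreover have "euclid_depth b a = Suc (euclid_depth b (a - b))"
        using euclid_depth_less[of b a] True ne by simp
      moreover have "euclid_depth (a - b) b = euclid_depth b (a - b)"
        using less.hyps[of "a-b" b] True ne by simp
      ultimately show ?thesis by simp
    next
      case False
      hence T: "a < b" using ne by simp
      have "euclid_depth a b = Suc (euclid_depth a (b - a))" using euclid_depth_less[of a b] T ne by simp
      moreover have "euclid_depth b a = Suc (euclid_depth (b - a) a)"
        using euclid_depth_ge[of a b] T ne by simp
      moreover have "euclid_depth a (b - a) = euclid_depth (b - a) a"
        using less.hyps[of a "b-a"] T ne by simp
      ultimately show ?thesis by simp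
    qed
  qed
qed

definition unimodular :: "nat \<Rightarrow> nat \<Rightarrow> nat \<Rightarrow> nat \<Rightarrow> bool" where
  "unimodular a b c d \<longleftrightarrow> \<bar>int a * int d - int b * int c\<bar> = 1"

lemma unimodular_swap: "unimodular a b c d \<Longrightarrow> unimodular b a d c"
  by (simp add: unimodular_def abs_minus_commute mult.commute)

lemma unimodular_dominates:
  assumes h: "unimodular a b c d" and pq: "b + d < a + c"
  shows "b \<le> a \<and> d \<le> c"
proof (rule ccontr)
  assume "\<not> (b \<le> a \<and> d \<le> c)"
  then consider "a < b" | "c < d" by linarith
  thus False
  proof cases
    case 1
    hence cd: "d < c" using pq by simp
    have "(a+1)*(d+1) \<le> b * c" using 1 cd by (intro mult_mono) auto
    hence "int ((a+1)*(d+1)) \<le> int (b*c)" by (simp only: of_nat_le_iff)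
    hence "int b * int c - int a * int d \<ge> int a + int d + 1" by (simp add: algebra_simps)
    hence e: "int b * int c - int a * int d = 1" "a = 0" "d = 0" using h by (auto simp: unimodular_def)
    hence "int (b*c) = int 1" by simp
    hence "b * c = 1" by (simp only: of_nat_eq_iff)
    hence "b = 1" "c = 1" by auto
    thus False using pq e by simp
  next
    case 2
    hence ab: "b < a" using pq by simp
    have "(b+1)*(c+1) \<le> a * d" using 2 ab by (intro mult_mono) auto
    hence "int ((b+1)*(c+1)) \<le> int (a*d)" by (simp only: of_nat_le_iff)
    hence "int a * int d - int b * int c \<ge> int b + int c + 1" by (simp add: algebra_simps)
    hence e: "int a * int d - int b * int c = 1" "b = 0" "c = 0" using h by (auto simp: unimodular_def)
    hence "int (a*d) = int 1" by simp
    hence "a * d = 1" by (simp only: of_nat_eq_iff)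
    hence "a = 1" "d = 1" by auto
    thus False using pq e by simp
  qed
qed

lemma euclid_depth_sub_max:
  assumes "b \<le> a" "d \<le> c" "0 < b + d"
  shows "Suc (max (euclid_depth (a-b) b) (euclid_depth (c-d) d)) = max (euclid_depth a b) (euclid_depth c d)"
proof (cases "b = 0")
  case True
  hence "euclid_depth c d = Suc (euclid_depth (c-d) d)"
    using euclid_depth_ge[OF assms(2)] assms(3) by simp
  thus ?thesis using True euclid_depth_0 by simp
next
  case False
  hence eb: "euclid_depth a b = Suc (euclid_depth (a-b) b)" using euclid_depth_ge[OF assms(1)] by simp
  show ?thesis
  proof (cases "d = 0")
    case True thus ?thesis using eb euclid_depth_0 by simp
  next
    case False
    hence "euclid_depth c d = Suc (euclid_depth (c-d) d)" using euclid_depth_ge[OF assms(2)] by simp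
    thus ?thesis using eb by simp
  qed
qed

lemma euclid_depth_add_step:
  assumes IH: "\<And>a' b' c' d'. a'+b'+c'+d' < a+b+c+d \<Longrightarrow> unimodular a' b' c' d' \<Longrightarrow>
                 euclid_depth (a'+c') (b'+d') = Suc (max (euclid_depth a' b') (euclid_depth c' d'))"
    and h: "unimodular a b c d" and pq: "b + d < a + c"
  shows "euclid_depth (a+c) (b+d) = Suc (max (euclid_depth a b) (euclid_depth c d))"
proof -
  have dom: "b \<le> a" "d \<le> c" using unimodular_dominates[OF h pq] by auto
  have q: "0 < b + d"
  proof (rule ccontr)
    assume "\<not> 0 < b + d" hence "b = 0" "d = 0" by auto
    thus False using h by (simp add: unimodular_def)
  qed
  have h': "unimodular (a-b) b (c-d) d"
  proof -
    have "int (a-b) * int d - int b * int (c-d) = int a * int d - int b * int c"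
      using dom by (simp add: of_nat_diff algebra_simps)
    thus ?thesis using h by (simp add: unimodular_def)
  qed
  have "euclid_depth (a+c) (b+d) = Suc (euclid_depth ((a-b) + (c-d)) (b+d))"
    using euclid_depth_ge[of "b+d" "a+c"] pq q dom by (simp add: diff_add_eq_diff_diff_swap)
  also have "\<dots> = Suc (Suc (max (euclid_depth (a-b) b) (euclid_depth (c-d) d)))"
    using IH[OF _ h'] dom q by simp
  also have "\<dots> = Suc (max (euclid_depth a b) (euclid_depth c d))"
    using euclid_depth_sub_max[OF dom q] by simp
  finally show ?thesis .
qed

lemma euclid_depth_add: "unimodular a b c d \<Longrightarrow> euclid_depth (a+c) (b+d) = Suc (max (euclid_depth a b) (euclid_depth c d))"
proof (induction "a+b+c+d" arbitrary: a b c d rule: less_induct)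
  case less
  consider "b + d < a + c" | "a + c < b + d" | "a + c = b + d" by linarith
  thus ?case
  proof cases
    case 1 thus ?thesis using euclid_depth_add_step[OF _ less.prems] less.hyps by blast
  next
    case 2
    have "euclid_depth (b+d) (a+c) = Suc (max (euclid_depth b a) (euclid_depth d c))"
      using euclid_depth_add_step[of b a d c, OF _ unimodular_swap[OF less.prems] 2] less.hyps
        by (simp add: add_ac)
    thus ?thesis by (simp add: euclid_depth_commute)
  next
    case 3
    have c: "int c = int b + int d - int a" using arg_cong[OF 3, of int] by simp
    have "int a * int d - int b * int c = (int a - int b) * (int b + int d)"
      unfolding c by algebra
    hence "\<bar>(int a - int b) * (int b + int d)\<bar> = 1"
      using less.prems by (simp add: unimodular_def)
    hence "\<bar>int a - int b\<bar> * \<bar>int b + int d\<bar> = 1" by (simp add: abs_mult)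
    hence "\<bar>int b + int d\<bar> = 1"
      using zmult_eq_1_iff[of "\<bar>int a - int b\<bar>" "\<bar>int b + int d\<bar>"] by auto
    hence bd: "b + d = 1" by simp
    hence ac: "a + c = 1" using 3 by simp
    show ?thesis using bd ac less.prems
      by (cases b; cases a) (auto simp: unimodular_def euclid_depth_0 euclid_depth_ge)
  qed
qed

section \<open>The standard edge\<close>

definition Quad :: "region set" where "Quad = {X \<in> Regions. 0 \<le> fst X \<and> 0 \<le> snd X}"
definition Quad_pos :: "region set" where "Quad_pos = {X \<in> Regions. 0 < fst X \<and> 0 < snd X}"
definition mediant :: "region \<Rightarrow> region \<Rightarrow> region" where "mediant X Y = (fst X + fst Y, snd X + snd Y)"
definition vdiff :: "region \<Rightarrow> region \<Rightarrow> region" where "vdiff X Y = (fst X - fst Y, snd X - snd Y)"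
definition depth :: "region \<Rightarrow> nat" where "depth X = euclid_depth (nat (fst X)) (nat (snd X))"
definition height :: "region \<Rightarrow> nat" where "height X = nat (fst X + snd X)"
definition dominates :: "region \<Rightarrow> region \<Rightarrow> bool" where "dominates X Y \<longleftrightarrow> fst Y \<le> fst X \<and> snd Y \<le> snd X"
definition axis_pair :: "region \<Rightarrow> region \<Rightarrow> bool" where
  "axis_pair X Y \<longleftrightarrow> (X = (1,0) \<and> Y = (0,1)) \<or> (X = (0,1) \<and> Y = (1,0))"

lemma nonneg_coprime_in_Regions: assumes "0 \<le> e" "0 \<le> f" "coprime e (f::int)" shows "(e,f) \<in> Regions"
proof (cases "f = 0")
  case True
  hence "\<bar>e\<bar> = 1" using assms(3) by (simp add: zdvd1_eq)
  thus ?thesis using True assms by (simp add: Regions_iff)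
next
  case False thus ?thesis using assms by (simp add: Regions_iff)
qed

lemma fadj_nonneg:
  assumes "0 \<le> a" "0 \<le> b" "0 \<le> c" "0 \<le> d" "\<bar>a*d - b*c\<bar> = 1"
  shows "fadj (a,b) (c,d)" "(a,b) \<in> Quad" "(c,d) \<in> Quad"
proof -
  have c1: "coprime a b" by (rule coprime_of_det_unit[where d=d and c=c]) (use assms(5) in arith)
  have e: "c*b - d*a = -(a*d - b*c)" by (simp add: algebra_simps)
  have c2: "coprime c d" by (rule coprime_of_det_unit[where d=b and c=a]) (use assms(5) e in arith)
  have R: "(a,b) \<in> Regions" "(c,d) \<in> Regions" using nonneg_coprime_in_Regions c1 c2 assms by auto
  show "fadj (a,b) (c,d)" using R assms(5) by (simp add: fadj_def fdet_def)
  show "(a,b) \<in> Quad" "(c,d) \<in> Quad" using R assms by (auto simp: Quad_def)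
qed

lemma fadj_det: "fadj (a,b) (c,d) \<Longrightarrow> \<bar>a*d - b*c\<bar> = 1" by (simp add: fadj_def fdet_def)

lemma Quad_mediant:
  assumes X: "X \<in> Quad" and Y: "Y \<in> Quad" and XY: "fadj X Y"
  shows "mediant X Y \<in> Quad" "fadj X (mediant X Y)" "fadj Y (mediant X Y)" "fadj (mediant X Y) X" "fadj (mediant X Y) Y"
proof -
  obtain a b c d where ab: "X = (a,b)" "Y = (c,d)" by (cases X; cases Y) auto
  have nn: "0 \<le> a" "0 \<le> b" "0 \<le> c" "0 \<le> d" using X Y ab by (auto simp: Quad_def)
  have D: "\<bar>a*d - b*c\<bar> = 1" using fadj_det XY ab by simp
  have p: "mediant X Y = (a+c, b+d)" using ab by (simp add: mediant_def)
  have d1: "\<bar>a*(b+d) - b*(a+c)\<bar> = 1" using D by (simp add: algebra_simps)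
  have d2: "\<bar>c*(b+d) - d*(a+c)\<bar> = 1" using D by (simp add: algebra_simps abs_minus_commute)
  show "mediant X Y \<in> Quad" "fadj X (mediant X Y)" using fadj_nonneg[OF _ _ _ _ d1] nn ab p by auto
  show "fadj Y (mediant X Y)" using fadj_nonneg[OF _ _ _ _ d2] nn ab p by auto
  thus "fadj (mediant X Y) Y" by (rule fadj_sym)
  show "fadj (mediant X Y) X" using fadj_nonneg[OF _ _ _ _ d1] nn ab p by (auto intro: fadj_sym)
qed

lemma region_of_Quad: "X \<in> Quad \<Longrightarrow> region_of X = X" using region_of_Regions by (simp add: Quad_def)

lemma Quad_fadj_dominates:
  assumes X: "X \<in> Quad" and Y: "Y \<in> Quad" and XY: "fadj X Y" and nax: "\<not> axis_pair X Y"
  shows "dominates X Y \<or> dominates Y X"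
proof (rule ccontr)
  obtain a b c d where ab: "X = (a,b)" "Y = (c,d)" by (cases X; cases Y) auto
  have nn: "0 \<le> a" "0 \<le> b" "0 \<le> c" "0 \<le> d" using X Y ab by (auto simp: Quad_def)
  have D: "\<bar>a*d - b*c\<bar> = 1" using fadj_det XY ab by simp
  assume "\<not> (dominates X Y \<or> dominates Y X)"
  hence "(c < a \<and> b < d) \<or> (a < c \<and> d < b)" using ab by (auto simp: dominates_def)
  thus False
  proof
    assume h: "c < a \<and> b < d"
    have "(c+1)*(b+1) \<le> a*d" using h nn by (intro mult_mono) auto
    hence "a*d - b*c \<ge> b + c + 1" by (simp add: algebra_simps)
    hence "a*d - b*c = 1" "b = 0" "c = 0" using D nn by auto
    hence "a*d = 1" by simp
    hence "a = 1" "d = 1" using nn by (auto simp: zmult_eq_1_iff)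
    thus False using nax ab \<open>b = 0\<close> \<open>c = 0\<close> by (simp add: axis_pair_def)
  next
    assume h: "a < c \<and> d < b"
    have "(a+1)*(d+1) \<le> c*b" using h nn by (intro mult_mono) auto
    hence "b*c - a*d \<ge> a + d + 1" by (simp add: algebra_simps)
    hence "b*c - a*d = 1" "a = 0" "d = 0" using D nn by auto
    hence "b*c = 1" by simp
    hence "b = 1" "c = 1" using nn by (auto simp: zmult_eq_1_iff)
    thus False using nax ab \<open>a = 0\<close> \<open>d = 0\<close> by (simp add: axis_pair_def)
  qed
qed

lemma Quad_vdiff:
  assumes X: "X \<in> Quad" and Y: "Y \<in> Quad" and XY: "fadj X Y" and g: "dominates X Y"
  shows "vdiff X Y \<in> Quad" "fadj (vdiff X Y) Y" "fadj (vdiff X Y) X" "fadj Y (vdiff X Y)" "fadj X (vdiff X Y)"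
    "X = mediant (vdiff X Y) Y"
proof -
  obtain a b c d where ab: "X = (a,b)" "Y = (c,d)" by (cases X; cases Y) auto
  have nn: "0 \<le> a" "0 \<le> b" "0 \<le> c" "0 \<le> d" "c \<le> a" "d \<le> b"
    using X Y ab g by (auto simp: Quad_def dominates_def)
  have D: "\<bar>a*d - b*c\<bar> = 1" using fadj_det XY ab by simp
  have p: "vdiff X Y = (a-c, b-d)" using ab by (simp add: vdiff_def)
  have d1: "\<bar>(a-c)*d - (b-d)*c\<bar> = 1" using D by (simp add: algebra_simps)
  have d2: "\<bar>(a-c)*b - (b-d)*a\<bar> = 1" using D by (simp add: algebra_simps abs_minus_commute)
  show "vdiff X Y \<in> Quad" "fadj (vdiff X Y) Y" using fadj_nonneg[OF _ _ _ _ d1] nn ab p by auto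
  show "fadj (vdiff X Y) X" using fadj_nonneg[OF _ _ _ _ d2] nn ab p by auto
  show "fadj Y (vdiff X Y)" using fadj_nonneg[OF _ _ _ _ d1] nn ab p by (auto intro: fadj_sym)
  show "fadj X (vdiff X Y)" using fadj_nonneg[OF _ _ _ _ d2] nn ab p by (auto intro: fadj_sym)
  show "X = mediant (vdiff X Y) Y" using ab by (simp add: mediant_def vdiff_def)
qed

lemma depth_mediant:
  assumes X: "X \<in> Quad" and Y: "Y \<in> Quad" and XY: "fadj X Y"
  shows "depth (mediant X Y) = Suc (max (depth X) (depth Y))"
proof -
  obtain a b c d where ab: "X = (a,b)" "Y = (c,d)" by (cases X; cases Y) auto
  have nn: "0 \<le> a" "0 \<le> b" "0 \<le> c" "0 \<le> d" using X Y ab by (auto simp: Quad_def)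
  have D: "\<bar>a*d - b*c\<bar> = 1" using fadj_det XY ab by simp
  have "unimodular (nat a) (nat b) (nat c) (nat d)" using D nn by (simp add: unimodular_def)
  from euclid_depth_add[OF this] show ?thesis
    using ab nn by (simp add: depth_def mediant_def nat_add_distrib)
qed

lemma depth_less_mediant:
  assumes X: "X \<in> Quad" and Y: "Y \<in> Quad" and XY: "fadj X Y"
  shows "depth X < depth (mediant X Y)" "depth Y < depth (mediant X Y)"
  using depth_mediant[OF assms] by auto

lemma Quad_common_fadj:
  assumes X: "X \<in> Quad" and Y: "Y \<in> Quad" and XY: "fadj X Y" and g: "dominates X Y"
    and W: "fadj X W" "fadj Y W"
  shows "W = mediant X Y \<or> W = vdiff X Y"
proof -
  have "W = region_of (mediant X Y) \<or> W = region_of (vdiff X Y)"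
    using common_fadj_cases[OF XY W] by (simp add: mediant_def vdiff_def)
  thus ?thesis using region_of_Quad Quad_mediant(1)[OF X Y XY] Quad_vdiff(1)[OF X Y XY g] by auto
qed

lemma Quad_vertex_mediant:
  assumes v: "v \<in> Verts" "v \<subseteq> Quad"
  shows "\<exists>X Y. X \<in> Quad \<and> Y \<in> Quad \<and> fadj X Y \<and> v = {X, Y, mediant X Y}"
proof -
  obtain P Q R where v': "v = {P,Q,R}" "fadj P Q" "fadj Q R" "fadj P R"
    using v(1) unfolding Verts_iff by blast
  have T: "P \<in> Quad" "Q \<in> Quad" "R \<in> Quad" using v' v(2) by auto
  have "R = region_of (mediant P Q) \<or> R = region_of (vdiff P Q)"
    using common_fadj_cases[OF v'(2) v'(4) v'(3)] by (simp add: mediant_def vdiff_def)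
  hence "R = mediant P Q \<or> R = vdiff P Q \<or> R = vdiff Q P"
    using region_of_cases[of "mediant P Q"] region_of_cases[of "vdiff P Q"] region_of_Quad[OF Quad_mediant(1)[OF T(1,2) v'(2)]]
    by (auto simp: vdiff_def mediant_def)
  moreover
  { assume "R = vdiff P Q"
    hence "P = mediant Q R" by (simp add: mediant_def vdiff_def)
    hence ?thesis using T v' by (intro exI[of _ Q] exI[of _ R]) (auto intro: fadj_sym) }
  moreover
  { assume "R = vdiff Q P"
    hence "Q = mediant P R" by (simp add: mediant_def vdiff_def)
    hence ?thesis using T v' by (intro exI[of _ P] exI[of _ R]) auto }
  moreover
  { assume "R = mediant P Q"
    hence ?thesis using T v' by (intro exI[of _ P] exI[of _ Q]) auto }
  ultimately show ?thesis by blast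
qed

lemma fadj_Quad_pos:
  assumes Z: "Z \<in> Quad_pos" and ZW: "fadj Z W" shows "W \<in> Quad"
proof -
  obtain a b c d where ab: "Z = (a,b)" "W = (c,d)" by (cases Z; cases W) auto
  have nn: "0 < a" "0 < b" using Z ab by (auto simp: Quad_pos_def)
  have D: "\<bar>a*d - b*c\<bar> = 1" using fadj_det ZW ab by simp
  have WR: "W \<in> Regions" using fadj_Regions(2)[OF ZW] .
  hence d: "d > 0 \<or> (d = 0 \<and> c = 1)" using ab by (simp add: Regions_iff)
  have "0 \<le> c"
  proof (rule ccontr)
    assume "\<not> 0 \<le> c"
    hence "d > 0" using d by auto
    have "a*d \<ge> 1*1" using nn \<open>d > 0\<close> by (intro mult_mono) auto
    moreover have "b*(-c) \<ge> 1*1" using nn \<open>\<not> 0 \<le> c\<close> by (intro mult_mono) auto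
    ultimately have "a*d - b*c \<ge> 2" by (simp add: algebra_simps)
    thus False using D by simp
  qed
  thus ?thesis using WR d ab by (auto simp: Quad_def)
qed

lemma Verts_Quad_pos: assumes v: "v \<in> Verts" "Z \<in> v" "Z \<in> Quad_pos" shows "v \<subseteq> Quad"
proof (rule subsetI)
  fix W assume W: "W \<in> v"
  show "W \<in> Quad"
  proof (cases "W = Z")
    case True thus ?thesis using v(3) by (simp add: Quad_pos_def Quad_def)
  next
    case False thus ?thesis using Verts_fadj[OF v(1) v(2) W] fadj_Quad_pos v(3) by auto
  qed
qed

lemma Quad_pos_Quad: "Z \<in> Quad_pos \<Longrightarrow> Z \<in> Quad" by (simp add: Quad_pos_def Quad_def)

lemma Quad_pos_mediant_aux:
  "0 < a \<Longrightarrow> 0 < b \<Longrightarrow> coprime a b \<Longrightarrow> \<exists>X Y. X \<in> Quad \<and> Y \<in> Quad \<and> fadj X Y \<and> (a,b) = mediant X Y"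
  proof (induction "nat (a+b)" arbitrary: a b rule: less_induct)
    case less
    consider "a = b" | "b < a" | "a < b" by linarith
    thus ?case
    proof cases
      case 1
      hence "a = 1" using less.prems by (simp add: zdvd1_eq)
      hence "(a,b) = mediant (1,0) (0,1)" using 1 by (simp add: mediant_def)
      moreover have "fadj (1,0) (0,1)" "(1::int,0::int) \<in> Quad" "(0::int,1::int) \<in> Quad"
        using fadj_nonneg[of 1 0 0 1] by auto
      ultimately show ?thesis by blast
    next
      case 2
      have cp: "coprime (a-b) b" using less.prems(3) by (simp add: coprime_iff_gcd_eq_1 gcd_diff1)
      obtain X Y where XY: "X \<in> Quad" "Y \<in> Quad" "fadj X Y" "(a-b, b) = mediant X Y"
        using less.hyps[of "a-b" b] 2 less.prems cp by force
      obtain x1 x2 y1 y2 where xy: "X = (x1,x2)" "Y = (y1,y2)" by (cases X; cases Y) auto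
      have nn: "0 \<le> x1" "0 \<le> x2" "0 \<le> y1" "0 \<le> y2" using XY xy by (auto simp: Quad_def)
      have D: "\<bar>x1*y2 - x2*y1\<bar> = 1" using fadj_det XY(3) xy by simp
      have D': "\<bar>(x1+x2)*y2 - x2*(y1+y2)\<bar> = 1" using D by (simp add: algebra_simps)
      have "(a,b) = mediant (x1+x2,x2) (y1+y2,y2)" using XY(4) xy by (auto simp: mediant_def)
      have nn2: "0 \<le> x1+x2" "0 \<le> y1+y2" using nn by auto
      thus ?thesis using fadj_nonneg[OF nn2(1) nn(2) nn2(2) nn(4) D'] \<open>(a,b) = _\<close> by blast
    next
      case 3
      have "gcd a (b-a) = gcd b a" by (metis gcd.commute gcd_diff1)
      hence cp: "coprime a (b-a)" using less.prems(3) by (simp add: coprime_iff_gcd_eq_1 gcd.commute)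
      obtain X Y where XY: "X \<in> Quad" "Y \<in> Quad" "fadj X Y" "(a, b-a) = mediant X Y"
        using less.hyps[of a "b-a"] 3 less.prems cp by force
      obtain x1 x2 y1 y2 where xy: "X = (x1,x2)" "Y = (y1,y2)" by (cases X; cases Y) auto
      have nn: "0 \<le> x1" "0 \<le> x2" "0 \<le> y1" "0 \<le> y2" using XY xy by (auto simp: Quad_def)
      have D: "\<bar>x1*y2 - x2*y1\<bar> = 1" using fadj_det XY(3) xy by simp
      have D': "\<bar>x1*(y1+y2) - (x1+x2)*y1\<bar> = 1" using D by (simp add: algebra_simps)
      have "(a,b) = mediant (x1,x1+x2) (y1,y1+y2)" using XY(4) xy by (auto simp: mediant_def)
      have nn2: "0 \<le> x1+x2" "0 \<le> y1+y2" using nn by auto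
      thus ?thesis using fadj_nonneg[OF nn(1) nn2(1) nn(3) nn2(2) D'] \<open>(a,b) = _\<close> by blast
    qed
  qed

lemma Quad_pos_mediant:
  assumes Z: "Z \<in> Quad_pos" shows "\<exists>X Y. X \<in> Quad \<and> Y \<in> Quad \<and> fadj X Y \<and> Z = mediant X Y"
proof -
  obtain a b where ab: "Z = (a,b)" by (cases Z)
  have "0 < a" "0 < b" "coprime a b" using Z ab by (auto simp: Quad_pos_def Regions_iff)
  thus ?thesis using Quad_pos_mediant_aux ab by simp
qed

lemma fadj_axes: "fadj (1,0) (0,1)" using fadj_nonneg[of 1 0 0 1] by simp

lemma std_tail_Verts: "std_tail \<in> Verts"
proof -
  have "fadj (1,0) (0,1)" "fadj (0,1) (1,1)" "fadj (1,0) (1,1)"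
    using fadj_nonneg[of 1 0 0 1] fadj_nonneg[of 0 1 1 1] fadj_nonneg[of 1 0 1 1] by simp_all
  thus ?thesis unfolding std_tail_def by (rule triangle_in_Verts)
qed

lemma std_head_Verts: "std_head \<in> Verts"
proof -
  have "(1::int,0::int) \<in> Regions" "(0::int,1::int) \<in> Regions" "(-1::int,1::int) \<in> Regions"
    by (simp_all add: Regions_iff)
  hence "fadj (1,0) (0,1)" "fadj (0,1) (-1,1)" "fadj (1,0) (-1,1)"
    by (simp_all add: fadj_def fdet_def)
  thus ?thesis unfolding std_head_def by (rule triangle_in_Verts)
qed

lemma std_tail_Quad: "std_tail \<subseteq> Quad" using std_tail_Verts Verts_subset_Regions by (auto simp: std_tail_def Quad_def)
lemma std_head_not_Quad: "\<not> std_head \<subseteq> Quad" by (auto simp: std_head_def Quad_def)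
lemma std_tail_ne_head: "std_tail \<noteq> std_head" using std_tail_Quad std_head_not_Quad by auto
lemma std_edge: "std_tail \<inter> std_head = {(1,0),(0,1)}" by (auto simp: std_tail_def std_head_def)

lemma vadj_std: "vadj std_tail std_head" "vadj std_head std_tail"
  using std_tail_Verts std_head_Verts std_tail_ne_head std_edge by (auto simp: vadj_def Int_commute)

lemma axis_pair_common_fadj:
  assumes "axis_pair P Q" "fadj P Z" "fadj Q Z"
  shows "Z = (1,1) \<or> Z = (-1,1)"
proof -
  have "fadj P Q" using assms(1) fadj_axes fadj_sym by (auto simp: axis_pair_def)
  from common_fadj_cases[OF this assms(2,3)] show ?thesis
    using assms(1) by (auto simp: axis_pair_def region_of_def)
qed

lemma axis_pair_std: "axis_pair P Q \<Longrightarrow> {P, Q, (1,1)} = std_tail \<and> {P, Q, (-1,1)} = std_head"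
  by (auto simp: axis_pair_def std_tail_def std_head_def)

lemma Quad_fadj_ordered:
  assumes "P \<in> Quad" "Q \<in> Quad" "fadj P Q" "\<not> axis_pair P Q"
  obtains X Y where "{X,Y} = {P,Q}" "X \<in> Quad" "Y \<in> Quad" "fadj X Y" "dominates X Y"
  using Quad_fadj_dominates[OF assms] assms fadj_sym by (metis insert_commute)

lemma Quad_vadj_closed:
  assumes uw: "vadj u w" and u: "u \<subseteq> Quad" and ne: "{u,w} \<noteq> {std_tail,std_head}"
  shows "w \<subseteq> Quad"
proof -
  obtain P Q Z W where s: "u = {P,Q,Z}" "w = {P,Q,W}" "fadj P Q" "fadj P Z" "fadj Q Z"
     "fadj P W" "fadj Q W" "Z \<noteq> W" using vadj_shared_edge[OF uw] by blast
  have T: "P \<in> Quad" "Q \<in> Quad" "Z \<in> Quad" using u s(1) by auto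
  show ?thesis
  proof (cases "axis_pair P Q")
    case True
    have "Z = (1,1) \<or> Z = (-1,1)" "W = (1,1) \<or> W = (-1,1)"
      using axis_pair_common_fadj[OF True] s by auto
    moreover have "Z \<noteq> (-1,1)" using T(3) by (auto simp: Quad_def)
    ultimately have "Z = (1,1)" "W = (-1,1)" using s(8) by auto
    hence "u = std_tail" "w = std_head" using axis_pair_std[OF True] s(1,2) by auto
    thus ?thesis using ne by simp
  next
    case False
    then obtain X Y where o: "{X,Y} = {P,Q}" "X \<in> Quad" "Y \<in> Quad" "fadj X Y" "dominates X Y"
      using Quad_fadj_ordered[OF T(1,2) s(3)] by blast
    have "fadj X W" "fadj Y W" using o(1) s(6,7) by (metis doubleton_eq_iff)+
    hence "W = mediant X Y \<or> W = vdiff X Y" using Quad_common_fadj[OF o(2-5)] by blast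
    hence "W \<in> Quad" using Quad_mediant(1)[OF o(2-4)] Quad_vdiff(1)[OF o(2-5)] by auto
    thus ?thesis using s(2) T by auto
  qed
qed

text \<open>A potential on vertices that grows by at most one along each edge of \<open>\<Sigma>\<close> and vanishes
at \<open>std_head\<close>; it bounds the distance from \<open>std_head\<close> from below.\<close>

definition vert_depth :: "region set \<Rightarrow> nat" where
  "vert_depth v = (if v \<subseteq> Quad then Max (depth ` v) else 0)"

lemma vert_depth_mediant:
  assumes "X \<in> Quad" "Y \<in> Quad" "fadj X Y"
  shows "vert_depth {X, Y, mediant X Y} = depth (mediant X Y)"
proof -
  have "{X, Y, mediant X Y} \<subseteq> Quad" using assms Quad_mediant(1)[OF assms] by auto
  moreover have "Max (depth ` {X, Y, mediant X Y}) = depth (mediant X Y)"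
    using depth_less_mediant[OF assms] by (simp add: max_def)
  ultimately show ?thesis by (simp add: vert_depth_def)
qed

lemma vert_depth_std_tail: "vert_depth std_tail = 1"
proof -
  have "std_tail = {(1,0), (0,1), mediant (1,0) (0,1)}" by (simp add: std_tail_def mediant_def)
  moreover have "(1::int,0::int) \<in> Quad" "(0::int,1::int) \<in> Quad"
    by (simp_all add: Quad_def Regions_iff)
  moreover have "vert_depth {(1,0), (0,1), mediant (1,0) (0,1)} = depth (mediant (1,0) (0,1))"
    by (rule vert_depth_mediant) (simp_all add: Quad_def Regions_iff fadj_axes)
  ultimately have "vert_depth std_tail = depth (mediant (1,0) (0,1))" by simp
  also have "\<dots> = 1" by (simp add: mediant_def depth_def euclid_depth_ge euclid_depth_0)
  finally show ?thesis .
qed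

lemma vert_depth_std_head: "vert_depth std_head = 0" using std_head_not_Quad by (simp add: vert_depth_def)

lemma vert_depth_vdiff:
  assumes "X \<in> Quad" "Y \<in> Quad" "fadj X Y" "dominates X Y"
  shows "vert_depth {X, Y, vdiff X Y} = depth X" "depth (mediant X Y) = Suc (depth X)"
proof -
  let ?D = "vdiff X Y"
  have D: "?D \<in> Quad" "fadj ?D Y" "X = mediant ?D Y" using Quad_vdiff[OF assms] by auto
  have "{X, Y, ?D} = {?D, Y, mediant ?D Y}" using D(3) by auto
  hence "vert_depth {X, Y, ?D} = depth (mediant ?D Y)"
    using vert_depth_mediant[OF D(1) assms(2) D(2)] by simp
  thus "vert_depth {X, Y, ?D} = depth X" using D(3) by simp
  have "depth Y < depth X" using depth_less_mediant(2)[OF D(1) assms(2) D(2)] D(3) by simp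
  thus "depth (mediant X Y) = Suc (depth X)" using depth_mediant[OF assms(1-3)] by simp
qed

lemma vert_depth_vadj:
  assumes uw: "vadj u w" shows "vert_depth w \<le> Suc (vert_depth u)"
proof (cases "w \<subseteq> Quad")
  case False thus ?thesis by (simp add: vert_depth_def)
next
  case wT: True
  show ?thesis
  proof (cases "u \<subseteq> Quad")
    case False
    have "{w,u} = {std_tail,std_head}" using Quad_vadj_closed[OF vadj_sym[OF uw] wT] False by blast
    hence "w = std_tail" using wT std_head_not_Quad by (metis doubleton_eq_iff)
    thus ?thesis using vert_depth_std_tail by simp
  next
    case uT: True
    obtain P Q Z W where s: "u = {P,Q,Z}" "w = {P,Q,W}" "fadj P Q" "fadj P Z" "fadj Q Z"
       "fadj P W" "fadj Q W" "Z \<noteq> W" using vadj_shared_edge[OF uw] by blast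
    have T: "P \<in> Quad" "Q \<in> Quad" "Z \<in> Quad" "W \<in> Quad" using uT wT s(1,2) by auto
    have nax: "\<not> axis_pair P Q"
    proof
      assume ax: "axis_pair P Q"
      have "Z = (1,1) \<or> Z = (-1,1)" "W = (1,1) \<or> W = (-1,1)"
        using axis_pair_common_fadj[OF ax] s by auto
      moreover have "Z \<noteq> (-1,1)" "W \<noteq> (-1,1)" using T by (auto simp: Quad_def)
      ultimately show False using s(8) by auto
    qed
    obtain X Y where o: "{X,Y} = {P,Q}" "X \<in> Quad" "Y \<in> Quad" "fadj X Y" "dominates X Y"
      using Quad_fadj_ordered[OF T(1,2) s(3) nax] by blast
    have "fadj X W" "fadj Y W" "fadj X Z" "fadj Y Z" using o(1) s(4-7) by (metis doubleton_eq_iff)+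
    hence ZW: "Z = mediant X Y \<or> Z = vdiff X Y" "W = mediant X Y \<or> W = vdiff X Y"
      using Quad_common_fadj[OF o(2-5)] by blast+
    have uw': "u = {X,Y,Z}" "w = {X,Y,W}" using s(1,2) o(1) by auto
    have p1: "vert_depth {X, Y, mediant X Y} = Suc (depth X)"
      using vert_depth_mediant[OF o(2-4)] vert_depth_vdiff[OF o(2-5)] by simp
    have p2: "vert_depth {X, Y, vdiff X Y} = depth X" using vert_depth_vdiff[OF o(2-5)] by simp
    show ?thesis using ZW s(8) uw' p1 p2 by auto
  qed
qed

lemma vert_depth_le_walk: "(vadj ^^ n) std_head v \<Longrightarrow> vert_depth v \<le> n"
proof (induction n arbitrary: v)
  case 0 thus ?case using vert_depth_std_head by simp
next
  case (Suc n)
  then obtain y where "(vadj ^^ n) std_head y" "vadj y v" by (auto elim: relpowp_Suc_E)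
  thus ?case using Suc.IH vert_depth_vadj by (meson Suc_le_mono le_trans)
qed

definition cut_vadj :: "region set \<Rightarrow> region set \<Rightarrow> bool" where
  "cut_vadj u w \<longleftrightarrow> vadj u w \<and> {u, w} \<noteq> {std_tail, std_head}"

lemma side_minus_std: "side_minus std_tail std_head = {v. cut_vadj\<^sup>*\<^sup>* std_tail v}"
  unfolding side_minus_def cut_vadj_def by simp

lemma vadj_vdiff_mediant:
  assumes "X \<in> Quad" "Y \<in> Quad" "fadj X Y" "dominates X Y"
  shows "vadj {vdiff X Y, Y, X} {X, Y, mediant X Y}"
proof -
  let ?D = "vdiff X Y" and ?S = "mediant X Y"
  have D: "?D \<in> Quad" "fadj ?D Y" "fadj ?D X" using Quad_vdiff[OF assms] by auto
  have S: "fadj X ?S" "fadj Y ?S" using Quad_mediant[OF assms(1-3)] by auto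
  have Y0: "Y \<noteq> (0,0)" "X \<noteq> (0,0)" using assms(1,2) by (auto simp: Quad_def Regions_iff)
  have n1: "?D \<noteq> X" using Y0 by (cases X; cases Y) (auto simp: vdiff_def)
  have n2: "?D \<noteq> Y" using D(2) fadj_neq by blast
  have n3: "?D \<noteq> ?S" using Y0 by (cases X; cases Y) (auto simp: vdiff_def mediant_def)
  have n4: "?S \<noteq> X" using Y0 by (cases X; cases Y) (auto simp: mediant_def)
  have n5: "?S \<noteq> Y" using Y0 by (cases X; cases Y) (auto simp: mediant_def)
  have XY: "X \<noteq> Y" using assms(3) fadj_neq by blast
  have "{?D, Y, X} \<inter> {X, Y, ?S} = {X, Y}" using n1 n2 n3 n4 n5 by blast
  hence "card ({?D, Y, X} \<inter> {X, Y, ?S}) = 2" using XY by simp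
  moreover have "{?D, Y, X} \<in> Verts" using D assms(3) triangle_in_Verts fadj_sym by metis
  moreover have "{X, Y, ?S} \<in> Verts" using S assms(3) triangle_in_Verts by metis
  moreover have "{?D, Y, X} \<noteq> {X, Y, ?S}" using n3 n1 n2 by blast
  ultimately show ?thesis by (simp add: vadj_def)
qed

lemma height_pos: "X \<in> Quad \<Longrightarrow> 1 \<le> height X"
  by (cases X) (auto simp: Quad_def height_def Regions_iff)

lemma height_mediant: "X \<in> Quad \<Longrightarrow> Y \<in> Quad \<Longrightarrow> height (mediant X Y) = height X + height Y"
  by (cases X; cases Y) (auto simp: Quad_def height_def mediant_def nat_add_distrib)

lemma Quad_vertex_reachable:
  assumes "X \<in> Quad" "Y \<in> Quad" "fadj X Y"
  shows "cut_vadj\<^sup>*\<^sup>* std_tail {X, Y, mediant X Y} \<and> (vadj ^^ depth (mediant X Y)) std_head {X, Y, mediant X Y}"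
  using assms
proof (induction "height (mediant X Y)" arbitrary: X Y rule: less_induct)
  case less
  show ?case
  proof (cases "axis_pair X Y")
    case True
    have "{X, Y, mediant X Y} = std_tail" "mediant X Y = (1,1)"
      using True by (auto simp: axis_pair_def std_tail_def mediant_def)
    moreover have "depth (1,1) = 1" by (simp add: depth_def euclid_depth_ge euclid_depth_0)
    moreover have "(vadj ^^ 1) std_head std_tail"
      using relpowp_Suc_I[where P=vadj and n=0 and x=std_head and y=std_head and z=std_tail] vadj_std(2)
        by simp
    ultimately show ?thesis by simp
  next
    case False
    obtain X' Y' where o: "{X',Y'} = {X,Y}" "X' \<in> Quad" "Y' \<in> Quad" "fadj X' Y'" "dominates X' Y'"
      using Quad_fadj_ordered[OF less.prems False] by blast
    have sw: "mediant X' Y' = mediant X Y" "{X', Y', mediant X' Y'} = {X, Y, mediant X Y}"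
      using o(1) by (auto simp: doubleton_eq_iff mediant_def)
    let ?D = "vdiff X' Y'"
    have D: "?D \<in> Quad" "fadj ?D Y'" "X' = mediant ?D Y'" using Quad_vdiff[OF o(2-5)] by auto
    have "height (mediant ?D Y') < height (mediant X Y)"
      using D(3) sw(1) height_mediant[OF o(2,3)] height_pos[OF o(3)] by simp
    hence IH: "cut_vadj\<^sup>*\<^sup>* std_tail {?D, Y', X'} \<and> (vadj ^^ depth X') std_head {?D, Y', X'}"
      using less.hyps[OF _ D(1) o(3) D(2)] D(3) by simp
    have va: "vadj {?D, Y', X'} {X', Y', mediant X' Y'}" using vadj_vdiff_mediant[OF o(2-5)] .
    have "{X', Y', mediant X' Y'} \<subseteq> Quad" using o Quad_mediant(1)[OF o(2-4)] by auto
    hence "{{?D, Y', X'}, {X', Y', mediant X' Y'}} \<noteq> {std_tail, std_head}" using std_head_not_Quad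
      by (metis D(1) o(2,3) doubleton_eq_iff empty_subsetI insert_subset)
    hence "cut_vadj {?D, Y', X'} {X', Y', mediant X' Y'}" using va by (simp add: cut_vadj_def)
    hence r1: "cut_vadj\<^sup>*\<^sup>* std_tail {X', Y', mediant X' Y'}"
      using IH by (meson rtranclp.rtrancl_into_rtrancl)
    have "(vadj ^^ Suc (depth X')) std_head {X', Y', mediant X' Y'}" using IH va by (meson relpowp_Suc_I)
    moreover have "depth (mediant X' Y') = Suc (depth X')" using vert_depth_vdiff(2)[OF o(2-5)] .
    ultimately show ?thesis using r1 sw by simp
  qed
qed

lemma side_minus_std_Quad: "v \<in> side_minus std_tail std_head \<Longrightarrow> v \<subseteq> Quad"
proof -
  assume "v \<in> side_minus std_tail std_head"
  hence "cut_vadj\<^sup>*\<^sup>* std_tail v" by (simp add: side_minus_std)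
  thus ?thesis
  proof (induction rule: rtranclp_induct)
    case base thus ?case using std_tail_Quad .
  next
    case (step y z) thus ?case using Quad_vadj_closed[of y z] by (simp add: cut_vadj_def)
  qed
qed

lemma Quad_side_minus_std: assumes "v \<in> Verts" "v \<subseteq> Quad" shows "v \<in> side_minus std_tail std_head"
proof -
  obtain X Y where "X \<in> Quad" "Y \<in> Quad" "fadj X Y" "v = {X, Y, mediant X Y}"
    using Quad_vertex_mediant[OF assms] by blast
  thus ?thesis using Quad_vertex_reachable side_minus_std by simp
qed

lemma Quad_cases_axes: assumes "X \<in> Quad" shows "X \<in> Quad_pos \<or> X = (1,0) \<or> X = (0,1)"
proof -
  obtain a b where ab: "X = (a,b)" by (cases X)
  have h: "0 \<le> a" "0 \<le> b" "coprime a b" "b > 0 \<or> (b = 0 \<and> a = 1)"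
    using assms ab by (auto simp: Quad_def Regions_iff)
  show ?thesis
  proof (cases "a = 0")
    case True
    hence "\<bar>b\<bar> = 1" using h(3) by (simp add: zdvd1_eq)
    thus ?thesis using True h ab by simp
  next
    case False
    hence "0 < a" using h by simp
    thus ?thesis using h ab assms by (auto simp: Quad_pos_def Quad_def)
  qed
qed

lemma Omega_minus_std: "Omega_minus std_tail std_head = Quad_pos"
proof
  show "Quad_pos \<subseteq> Omega_minus std_tail std_head"
  proof
    fix Z assume Z: "Z \<in> Quad_pos"
    have "\<forall>v\<in>Verts. Z \<in> v \<longrightarrow> v \<in> side_minus std_tail std_head"
    proof (intro ballI impI)
      fix v assume "v \<in> Verts" "Z \<in> v"
      thus "v \<in> side_minus std_tail std_head"
        using Verts_Quad_pos[OF _ _ Z] Quad_side_minus_std by simp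
    qed
    thus "Z \<in> Omega_minus std_tail std_head" using Z by (simp add: Omega_minus_def Quad_pos_def)
  qed
next
  show "Omega_minus std_tail std_head \<subseteq> Quad_pos"
  proof
    fix Z assume Z: "Z \<in> Omega_minus std_tail std_head"
    have ZR: "Z \<in> Regions" and Zv: "\<forall>v\<in>Verts. Z \<in> v \<longrightarrow> v \<in> side_minus std_tail std_head"
      using Z by (auto simp: Omega_minus_def)
    obtain W where ZW: "fadj Z W" using fadj_ex[OF ZR] by blast
    have "{Z, W, region_of (fst Z + fst W, snd Z + snd W)} \<in> Verts"
      using fadj_region_of_sum_diff(1,2)[OF ZW] ZW by (meson triangle_in_Verts)
    hence "Z \<in> Quad" using Zv side_minus_std_Quad by blast
    moreover have "Z \<notin> std_head"
    proof
      assume "Z \<in> std_head"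
      hence "std_head \<subseteq> Quad" using Zv std_head_Verts side_minus_std_Quad by blast
      thus False using std_head_not_Quad by simp
    qed
    ultimately show "Z \<in> Quad_pos" using Quad_cases_axes[of Z] by (simp add: std_head_def)
  qed
qed

lemma Quad_cases: "X \<in> Quad \<Longrightarrow> X \<in> Quad_pos \<or> X \<in> std_tail \<inter> std_head"
  using Quad_cases_axes std_edge by auto

lemma Omega_0minus_std: "Omega_0minus std_tail std_head = Quad"
  unfolding Omega_0minus_def Omega_minus_std using Quad_cases Quad_pos_Quad std_tail_Quad by blast

lemma dhead_std_edge: assumes "Z \<in> std_tail \<inter> std_head" shows "dhead std_head Z = 0"
proof -
  have "\<exists>v\<in>Verts. Z \<in> v \<and> (vadj ^^ 0) std_head v" using assms std_head_Verts by auto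
  thus ?thesis unfolding dhead_def by (rule Least_eq_0)
qed

lemma depth_std_edge: "Z \<in> std_tail \<inter> std_head \<Longrightarrow> depth Z = 0"
  using std_edge by (auto simp: depth_def euclid_depth_0)

lemma dhead_Quad_pos: assumes Z: "Z \<in> Quad_pos" shows "dhead std_head Z = depth Z"
proof -
  obtain X Y where XY: "X \<in> Quad" "Y \<in> Quad" "fadj X Y" "Z = mediant X Y"
    using Quad_pos_mediant[OF Z] by blast
  have P: "\<exists>v\<in>Verts. Z \<in> v \<and> (vadj ^^ depth Z) std_head v"
  proof -
    have V: "{X, Y, Z} \<in> Verts"
      using triangle_in_Verts[OF XY(3) Quad_mediant(3)[OF XY(1-3)] Quad_mediant(2)[OF XY(1-3)]] XY(4)
        by simp
    have W: "(vadj ^^ depth Z) std_head {X, Y, Z}" using Quad_vertex_reachable[OF XY(1-3)] XY(4) by simp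
    show ?thesis
    proof (rule bexI[where x="{X,Y,Z}"])
      show "{X,Y,Z} \<in> Verts" by (rule V)
      show "Z \<in> {X, Y, Z} \<and> (vadj ^^ depth Z) std_head {X, Y, Z}" using W by simp
    qed
  qed
  have L: "depth Z \<le> m" if asm: "\<exists>v\<in>Verts. Z \<in> v \<and> (vadj ^^ m) std_head v" for m
  proof -
    obtain v where v: "v \<in> Verts" "Z \<in> v" "(vadj ^^ m) std_head v" using asm by blast
    have "v \<subseteq> Quad" using Verts_Quad_pos[OF v(1,2) Z] .
    hence "vert_depth v = Max (depth ` v)" by (simp add: vert_depth_def)
    moreover have "depth Z \<le> Max (depth ` v)" using Verts_card[OF v(1)] v(2) by (simp add: Max_ge)
    ultimately show ?thesis using vert_depth_le_walk[OF v(3)] by simp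
  qed
  show ?thesis unfolding dhead_def
    by (rule Least_equality[where P="\<lambda>n. \<exists>v\<in>Verts. Z \<in> v \<and> (vadj ^^ n) std_head v", OF P L])
qed

lemma dhead_std: "Z \<in> Quad \<Longrightarrow> dhead std_head Z = depth Z"
  using Quad_cases dhead_std_edge depth_std_edge dhead_Quad_pos by fastforce

lemma fib_rel_std_unique: "fib_rel std_tail std_head Z n \<Longrightarrow> n = height Z"
proof (induction rule: fib_rel.induct)
  case (base Z) thus ?case using std_edge by (auto simp: height_def)
next
  case (step Z X Y a b)
  have ZO: "Z \<in> Quad_pos" using step.hyps(1) Omega_minus_std by simp
  have XT: "X \<in> Quad" "Y \<in> Quad" using step.hyps(2,3) Omega_0minus_std by auto
  have EX: "depth X < depth Z" "depth Y < depth Z"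
    using step.hyps(6,7) dhead_std XT Quad_pos_Quad[OF ZO] by auto
  have v: "{X,Y,Z} \<subseteq> Quad" using Verts_Quad_pos[OF step.hyps(5) _ ZO] by simp
  obtain P Q where PQ: "P \<in> Quad" "Q \<in> Quad" "fadj P Q" "{X,Y,Z} = {P, Q, mediant P Q}"
    using Quad_vertex_mediant[OF step.hyps(5) v] by blast
  have G: "depth P < depth (mediant P Q)" "depth Q < depth (mediant P Q)"
    using depth_less_mediant[OF PQ(1-3)] by auto
  have d: "X \<noteq> Y" "X \<noteq> Z" "Y \<noteq> Z" using step.hyps(4) EX by auto
  have "Z = mediant P Q"
  proof (rule ccontr)
    assume nz: "Z \<noteq> mediant P Q"
    have "mediant P Q \<in> {X,Y,Z}" using PQ(4) by auto
    hence "mediant P Q = X \<or> mediant P Q = Y" using nz by auto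
    moreover have "Z = P \<or> Z = Q" using PQ(4) nz by auto
    ultimately show False using EX G by auto
  qed
  have m: "X \<in> {P,Q,mediant P Q}" "Y \<in> {P,Q,mediant P Q}" using PQ(4) by blast+
  have "X \<in> {P,Q}" "Y \<in> {P,Q}" using m d \<open>Z = mediant P Q\<close> by blast+
  hence "(X = P \<and> Y = Q) \<or> (X = Q \<and> Y = P)" using d(1) by blast
  hence "height X + height Y = height P + height Q" by auto
  thus ?case using step.IH height_mediant[OF PQ(1,2)] \<open>Z = mediant P Q\<close> by simp
qed

lemma fib_rel_std_height: "Z \<in> Quad \<Longrightarrow> fib_rel std_tail std_head Z (height Z)"
proof (induction "height Z" arbitrary: Z rule: less_induct)
  case less
  show ?case
  proof (cases "Z \<in> std_tail \<inter> std_head")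
    case True
    hence "height Z = 1" using std_edge by (auto simp: height_def)
    thus ?thesis using True fib_rel.base by simp
  next
    case False
    hence ZO: "Z \<in> Quad_pos" using Quad_cases less.prems by blast
    obtain X Y where XY: "X \<in> Quad" "Y \<in> Quad" "fadj X Y" "Z = mediant X Y"
      using Quad_pos_mediant[OF ZO] by blast
    have F: "height Z = height X + height Y" using height_mediant[OF XY(1,2)] XY(4) by simp
    have "height X < height Z" "height Y < height Z"
      using F height_pos[OF XY(1)] height_pos[OF XY(2)] by auto
    hence IH: "fib_rel std_tail std_head X (height X)" "fib_rel std_tail std_head Y (height Y)"
      using less.hyps XY by auto
    have V: "{X, Y, Z} \<in> Verts"
      using triangle_in_Verts[OF XY(3) Quad_mediant(3)[OF XY(1-3)] Quad_mediant(2)[OF XY(1-3)]] XY(4)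
        by simp
    have D: "dhead std_head X < dhead std_head Z" "dhead std_head Y < dhead std_head Z"
      using dhead_std XY(1,2) less.prems depth_less_mediant[OF XY(1-3)] XY(4) by auto
    have "fib_rel std_tail std_head Z (height X + height Y)"
      using fib_rel.step[OF _ _ _ _ V D IH] ZO Omega_minus_std Omega_0minus_std XY fadj_neq by simp
    thus ?thesis using F by simp
  qed
qed

lemma fib_rel_std_iff: "Z \<in> Quad \<Longrightarrow> fib_rel std_tail std_head Z n \<longleftrightarrow> n = height Z"
  using fib_rel_std_unique fib_rel_std_height by blast

lemma reflect_in_Quad: assumes "W \<in> Regions" "W \<notin> Quad" shows "reflect W \<in> Quad"
proof -
  obtain a b where ab: "W = (a,b)" by (cases W)
  have h: "b > 0 \<or> (b = 0 \<and> a = 1)" using assms(1) ab by (simp add: Regions_iff)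
  have "b > 0" "a < 0" using h assms ab by (auto simp: Quad_def)
  hence "reflect W = (-a, b)" using ab by (simp add: reflect_def lin_map_def region_of_def)
  moreover have "reflect W \<in> Regions" using farey_aut_Regions[OF farey_aut_reflect assms(1)] .
  ultimately show ?thesis using \<open>b > 0\<close> \<open>a < 0\<close> by (simp add: Quad_def)
qed

section \<open>Fibonacci functions\<close>

lemma fib_rel_tail_side:
  assumes th: "vadj t h" and Z: "Z \<in> Omega_0minus t h"
  shows "\<exists>k. fib_rel t h Z = (\<lambda>n. n = k)"
proof -
  obtain g g' where g: "farey_aut g g'" "g ` t = std_tail" "g ` h = std_head"
    using farey_aut_to_std_edge[OF th] by blast
  have ZR: "Z \<in> Regions" using Z Omega_0minus_Regions[OF th] by blast
  have "g Z \<in> Quad" using farey_aut_Omega_0minus_iff[OF g(1) th ZR] Z g Omega_0minus_std by simp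
  hence "fib_rel t h Z n \<longleftrightarrow> n = height (g Z)" for n
    using farey_aut_fib_rel_iff[OF g(1) th ZR, of n] g fib_rel_std_iff by simp
  thus ?thesis by blast
qed

lemma fib_rel_head_side:
  assumes th: "vadj t h" and Z: "Z \<in> Regions" "Z \<notin> Omega_0minus t h"
  shows "\<exists>k. fib_rel h t Z = (\<lambda>n. n = k)"
proof -
  obtain g g' where g: "farey_aut g g'" "g ` t = std_tail" "g ` h = std_head"
    using farey_aut_to_std_edge[OF th] by blast
  have gZ: "g Z \<in> Regions" using farey_aut_Regions[OF g(1) Z(1)] .
  have "g Z \<notin> Quad"
    using farey_aut_Omega_0minus_iff[OF g(1) th Z(1)] Z(2) g Omega_0minus_std by simp
  hence rQ: "reflect (g Z) \<in> Quad" using reflect_in_Quad gZ by simp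
  have "fib_rel h t Z n \<longleftrightarrow> n = height (reflect (g Z))" for n
  proof -
    have "fib_rel h t Z n \<longleftrightarrow> fib_rel std_head std_tail (g Z) n"
      using farey_aut_fib_rel_iff[OF g(1) vadj_sym[OF th] Z(1), of n] g by simp
    also have "\<dots> \<longleftrightarrow> fib_rel std_tail std_head (reflect (g Z)) n"
      using farey_aut_fib_rel_iff[OF farey_aut_reflect vadj_std(2) gZ, of n]
        reflect_std_tail reflect_std_head by simp
    also have "\<dots> \<longleftrightarrow> n = height (reflect (g Z))" using fib_rel_std_iff[OF rQ] .
    finally show ?thesis .
  qed
  thus ?thesis by blast
qed

lemma fib_rel_fib_edge:
  assumes th: "vadj t h" and Z: "Z \<in> Regions"
  shows "fib_rel t h Z (fib_edge t h Z) \<or> fib_rel h t Z (fib_edge t h Z)"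
proof (cases "Z \<in> Omega_0minus t h")
  case True
  then obtain k where "fib_rel t h Z = (\<lambda>n. n = k)" using fib_rel_tail_side[OF th] by blast
  thus ?thesis using True by (simp add: fib_edge_def fib_dir_def)
next
  case False
  then obtain k where "fib_rel h t Z = (\<lambda>n. n = k)" using fib_rel_head_side[OF th Z] by blast
  thus ?thesis using False by (simp add: fib_edge_def fib_dir_def)
qed

lemma fib_rel_bound:
  fixes L :: "region \<Rightarrow> real"
  assumes "fib_rel t h Z n"
    and base: "\<And>W. W \<in> t \<inter> h \<Longrightarrow> L W \<le> \<kappa>"
    and subadd: "\<And>X Y Z. {X, Y, Z} \<in> Verts \<Longrightarrow> L Z \<le> L X + L Y"
  shows "L Z \<le> \<kappa> * real n"
  using assms(1)
proof (induction rule: fib_rel.induct)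
  case (base Z) thus ?case using assms(2) by simp
next
  case (step Z X Y a b)
  have "L Z \<le> L X + L Y" using subadd[OF step.hyps(5)] .
  also have "\<dots> \<le> \<kappa> * real a + \<kappa> * real b" using step.IH by simp
  finally show ?case by (simp add: distrib_left)
qed

section \<open>Growth of Markoff maps\<close>

lemma quadratic_root_bound:
  fixes z a b :: complex
  assumes "z * z = a * z + b"
  shows "cmod z \<le> cmod a + sqrt (cmod b)"
proof (rule ccontr)
  assume "\<not> ?thesis"
  hence lt: "cmod a + sqrt (cmod b) < cmod z" by simp
  have "cmod z * cmod z \<le> cmod a * cmod z + cmod b"
    using assms norm_triangle_ineq[of "a * z" b] by (metis norm_mult)
  also have "cmod b \<le> sqrt (cmod b) * cmod z"
  proof -
    have "sqrt (cmod b) \<le> cmod z" using lt norm_ge_zero[of a] by linarith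
    hence "sqrt (cmod b) * sqrt (cmod b) \<le> sqrt (cmod b) * cmod z" by (rule mult_left_mono) simp
    thus ?thesis by simp
  qed
  also have "cmod a * cmod z + sqrt (cmod b) * cmod z < cmod z * cmod z"
  proof -
    have "0 \<le> sqrt (cmod b)" by simp
    hence "0 < cmod z" using lt norm_ge_zero[of a] by linarith
    thus ?thesis using mult_strict_right_mono[OF lt] by (simp add: distrib_right)
  qed
  finally show False by simp
qed

lemma markoff_root_bound:
  fixes x y z m1 m2 m3 s :: complex and K :: real
  assumes eq: "x\<^sup>2 + y\<^sup>2 + z\<^sup>2 + x*y*z = m1*x + m2*y + m3*z + s"
    and K: "1 \<le> K" "cmod m1 \<le> K" "cmod m2 \<le> K" "cmod m3 \<le> K" "cmod s \<le> K"
  shows "cmod z \<le> 5 * K * (max 1 (cmod x) * max 1 (cmod y))"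
proof -
  define M where "M = max 1 (cmod x) * max 1 (cmod y)"
  have A: "1 \<le> max 1 (cmod x)" "1 \<le> max 1 (cmod y)" by simp_all
  have M: "1 \<le> M" "cmod x \<le> M" "cmod y \<le> M" "cmod x * cmod y \<le> M"
    unfolding M_def using mult_mono[OF A] mult_mono[of "cmod x" "max 1 (cmod x)" 1 "max 1 (cmod y)"]
      mult_mono[of 1 "max 1 (cmod x)" "cmod y" "max 1 (cmod y)"]
      mult_mono[of "cmod x" "max 1 (cmod x)" "cmod y" "max 1 (cmod y)"] by simp_all
  have root: "z * z = (m3 - x*y) * z + (m1*x + m2*y + s - x*x - y*y)"
    using eq by (simp add: algebra_simps power2_eq_square)
  have KM: "1 \<le> K*M" "K \<le> K*M" "M \<le> K*M"
    using mult_mono[OF K(1) M(1)] mult_left_mono[OF M(1), of K] mult_right_mono[OF K(1), of M] K(1) M(1)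
    by simp_all
  have a: "cmod (m3 - x*y) \<le> 2*K*M"
  proof -
    have "cmod (m3 - x*y) \<le> K + M"
      using norm_triangle_ineq4[of m3 "x*y"] K(4) M(4) by (simp add: norm_mult)
    also have "\<dots> \<le> 2*K*M" using KM by simp
    finally show ?thesis .
  qed
  have b: "cmod (m1*x + m2*y + s - x*x - y*y) \<le> (3*K*M)\<^sup>2"
  proof -
    have "cmod (m1*x + m2*y + s - x*x - y*y) \<le> cmod m1 * cmod x + cmod m2 * cmod y + cmod s + cmod x * cmod x + cmod y * cmod y"
      by (rule order.trans[OF norm_triangle_ineq4] add_mono order.trans[OF norm_triangle_ineq] | simp add: norm_mult)+
    also have "\<dots> \<le> K*M + K*M + K + M*M + M*M"
      using K M by (intro add_mono mult_mono) auto
    also have "\<dots> \<le> (3*K*M)\<^sup>2"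
    proof -
      have "K*M \<le> (K*M)*(K*M)" using mult_left_mono[OF KM(1), of "K*M"] KM(1) by simp
      moreover have "M*M \<le> (K*M)*(K*M)" by (rule mult_mono) (use KM M(1) in auto)
      ultimately have "K \<le> (K*M)*(K*M)" "K*M \<le> (K*M)*(K*M)" "M*M \<le> (K*M)*(K*M)"
        using KM(2) by simp_all
      moreover have "(3*K*M)\<^sup>2 = 9 * ((K*M)*(K*M))" by (simp add: power2_eq_square)
      ultimately show ?thesis using K(1) by linarith
    qed
    finally show ?thesis .
  qed
  have "cmod z \<le> 2*K*M + 3*K*M"
    using quadratic_root_bound[OF root] a real_sqrt_le_mono[OF b] K(1) M(1) by simp
  thus ?thesis by (simp add: M_def)
qed

lemma logplus_eq_ln_max: "logplus w = ln (max 1 (cmod w))"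
  by (simp add: logplus_def max_def)

lemma logplus_markoff_root:
  fixes x y z m1 m2 m3 s :: complex and K :: real
  assumes "x\<^sup>2 + y\<^sup>2 + z\<^sup>2 + x*y*z = m1*x + m2*y + m3*z + s"
    and K: "1 \<le> K" "cmod m1 \<le> K" "cmod m2 \<le> K" "cmod m3 \<le> K" "cmod s \<le> K"
  shows "logplus z \<le> ln (5*K) + logplus x + logplus y"
proof -
  have pos: "0 < max 1 (cmod x)" "0 < max 1 (cmod y)" "0 < 5*K" using K(1) by auto
  have "1 \<le> 5 * K * (max 1 (cmod x) * max 1 (cmod y))"
    using mult_mono[of 1 "5*K" 1 "max 1 (cmod x) * max 1 (cmod y)"] mult_mono[of 1 "max 1 (cmod x)" 1 "max 1 (cmod y)"] K(1)
    by simp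
  hence "max 1 (cmod z) \<le> 5 * K * (max 1 (cmod x) * max 1 (cmod y))"
    using markoff_root_bound[OF assms] by simp
  hence "ln (max 1 (cmod z)) \<le> ln (5 * K * (max 1 (cmod x) * max 1 (cmod y)))" by simp
  also have "\<dots> = ln (5*K) + ln (max 1 (cmod x)) + ln (max 1 (cmod y))"
    using pos by (simp add: ln_mult)
  finally show ?thesis by (simp add: logplus_eq_ln_max)
qed

lemma valid_coloring_vertex:
  assumes vc: "valid_coloring CR CE" and adj: "fadj X Y" "fadj X Z" "fadj Y Z"
  shows "CR X \<noteq> CR Y \<and> CR X \<noteq> CR Z \<and> CR Y \<noteq> CR Z \<and> CR X \<in> {1,2,3} \<and> CR Y \<in> {1,2,3} \<and> CR Z \<in> {1,2,3}"
proof -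
  let ?N1 = "region_of (fst X + fst Y, snd X + snd Y)" and ?N2 = "region_of (fst X - fst Y, snd X - snd Y)"
  have Z: "Z = ?N1 \<or> Z = ?N2" using common_fadj_cases[OF adj] .
  have N: "fadj X ?N1" "fadj Y ?N1" "fadj X ?N2" "fadj Y ?N2" "?N1 \<noteq> ?N2"
    using fadj_region_of_sum_diff[OF adj(1)] by auto
  obtain W where W: "fadj X W" "fadj Y W" "Z \<noteq> W"
    using Z N by metis
  have "edge_data X Y Z W"
    unfolding edge_data_def
    using triangle_in_Verts[OF adj(1) adj(3) adj(2)] triangle_in_Verts[OF adj(1) W(2) W(1)] fadj_neq adj W
      by blast
  hence "CE {X, Y} = CR Z \<and> CE {X, Y} \<noteq> CR X \<and> CE {X, Y} \<noteq> CR Y \<and> CR X \<noteq> CR Y"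
    using vc unfolding valid_coloring_def by blast
  moreover have "X \<in> Regions" "Y \<in> Regions" "Z \<in> Regions" using adj fadj_Regions by auto
  ultimately show ?thesis using vc unfolding valid_coloring_def by auto
qed

lemma markoff_vertex_eq:
  assumes mk: "markoff_map CR CE p q r s \<phi>" and vc: "valid_coloring CR CE"
    and V: "{X, Y, Z} \<in> Verts"
  shows "(\<phi> X)\<^sup>2 + (\<phi> Y)\<^sup>2 + (\<phi> Z)\<^sup>2 + \<phi> X * \<phi> Y * \<phi> Z
     = mu_col p q r (CR X) * \<phi> X + mu_col p q r (CR Y) * \<phi> Y + mu_col p q r (CR Z) * \<phi> Z + s"
proof -
  have M: "(\<phi> A)\<^sup>2 + (\<phi> B)\<^sup>2 + (\<phi> C)\<^sup>2 + \<phi> A * \<phi> B * \<phi> C = p * \<phi> A + q * \<phi> B + r * \<phi> C + s"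
    if "{A, B, C} = {X, Y, Z}" "CR A = 1" "CR B = 2" "CR C = 3" for A B C
    using mk that V unfolding markoff_map_def by metis
  have "CR X \<noteq> CR Y" "CR X \<noteq> CR Z" "CR Y \<noteq> CR Z" "CR X \<in> {1,2,3}" "CR Y \<in> {1,2,3}" "CR Z \<in> {1,2,3}"
    using valid_coloring_vertex[OF vc Verts_triangle[OF V]] by auto
  then consider "CR X = 1" "CR Y = 2" "CR Z = 3" | "CR X = 1" "CR Y = 3" "CR Z = 2"
    | "CR X = 2" "CR Y = 1" "CR Z = 3" | "CR X = 2" "CR Y = 3" "CR Z = 1"
    | "CR X = 3" "CR Y = 1" "CR Z = 2" | "CR X = 3" "CR Y = 2" "CR Z = 1"
    by auto
  thus ?thesis
  proof cases
    case 1 thus ?thesis using M[of X Y Z] by (simp add: mu_col_def)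
  next
    case 2 thus ?thesis using M[of X Z Y] by (simp add: mu_col_def insert_commute algebra_simps)
  next
    case 3 thus ?thesis using M[of Y X Z] by (simp add: mu_col_def insert_commute algebra_simps)
  next
    case 4 thus ?thesis using M[of Z X Y] by (simp add: mu_col_def insert_commute algebra_simps)
  next
    case 5 thus ?thesis using M[of Y Z X] by (simp add: mu_col_def insert_commute algebra_simps)
  next
    case 6 thus ?thesis using M[of Z Y X] by (simp add: mu_col_def insert_commute algebra_simps)
  qed
qed

lemma logplus_markoff_vertex:
  assumes "valid_coloring CR CE" "markoff_map CR CE p q r s \<phi>" "{X, Y, Z} \<in> Verts"
  shows "logplus (\<phi> Z)
    \<le> ln (5 * (1 + cmod p + cmod q + cmod r + cmod s)) + logplus (\<phi> X) + logplus (\<phi> Y)"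
  by (rule logplus_markoff_root[OF markoff_vertex_eq[OF assms(2,1,3)]])
    (auto simp: mu_col_def)

theorem lemma4p4:
  fixes CR :: "region \<Rightarrow> nat" and CE :: "region set \<Rightarrow> nat"
    and p q r s :: complex and \<phi> :: "region \<Rightarrow> complex"
    and t h :: "region set"
  assumes "valid_coloring CR CE"
    and "markoff_map CR CE p q r s \<phi>"
    and "vadj t h"
  shows "\<exists>\<kappa>>0. \<forall>X\<in>Regions. logplus (\<phi> X) \<le> \<kappa> * real (fib_edge t h X)"
proof -
  define c where "c = ln (5 * (1 + cmod p + cmod q + cmod r + cmod s))"
  define L where "L W = logplus (\<phi> W) + c" for W
  define \<kappa> where "\<kappa> = sum L (t \<inter> h)"
  have "0 < c" unfolding c_def by (simp add: add_pos_nonneg)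
  hence L_pos: "0 < L W" for W unfolding L_def by (simp add: add_nonneg_pos logplus_def)
  have subadd: "L Z \<le> L X + L Y" if "{X, Y, Z} \<in> Verts" for X Y Z
    using logplus_markoff_vertex[OF assms(1,2) that] L_pos[of X] unfolding L_def c_def by simp
  have fin: "finite (t \<inter> h)" and ne: "t \<inter> h \<noteq> {}"
    using assms(3) Verts_card by (auto simp: vadj_def)
  have base: "L W \<le> \<kappa>" if "W \<in> t \<inter> h" for W
    unfolding \<kappa>_def using member_le_sum[OF that _ fin, of L] L_pos less_imp_le by blast
  have "logplus (\<phi> X) \<le> \<kappa> * real (fib_edge t h X)" if "X \<in> Regions" for X
  proof -
    have "L X \<le> \<kappa> * real (fib_edge t h X)"
      using fib_rel_fib_edge[OF assms(3) that] fib_rel_bound[of t h X _ L \<kappa>]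
        fib_rel_bound[of h t X _ L \<kappa>] base subadd by (auto simp: Int_commute)
    thus ?thesis using \<open>0 < c\<close> unfolding L_def by linarith
  qed
  moreover have "0 < \<kappa>" unfolding \<kappa>_def using fin ne L_pos by (simp add: sum_pos)
  ultimately show ?thesis by blast
qed

end
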